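(* Let $\mathcal{L}_\to\subseteq\{\land,\lor,\to,\lnot,0,1\}$ be a language containing $\to$ and $\Phi$ a Sahlqvist quasiequation in $\mathcal{L}_\to$. For every $\mathcal{L}_\to$-subreduct $\boldsymbol{A}$ of a Heyting algebra: $\boldsymbol{A}\vDash\mathsf{A}(\Phi)$ if and only if $\boldsymbol{B}_\ast\vDash\mathsf{tr}(\Phi)$ for every $\boldsymbol{B}\in\mathbb{V}(\boldsymbol{A})$.
   Context: An $\mathcal{L}_\to$-subreduct of a Heyting algebra is a subalgebra of its $\mathcal{L}_\to$-reduct; $\mathbb{V}(\boldsymbol{A})$ is the variety generated by $\boldsymbol{A}$. In such an algebra $x\to x$ is constant with value $1$; a formula $\varphi$ is valid in $\boldsymbol{A}$ if $\boldsymbol{A}\vDash\varphi\approx1$, and $\boldsymbol{A}\vDash S$ for a set $S$ of formulas means every member is valid. An implicative filter of $\boldsymbol{A}$ is $F\subseteq A$ with $1\in F$ and $a,a\to b\in F\Rightarrow b\in F$; $\boldsymbol{A}_\ast$ is the poset under inclusion of meet irreducible implicative filters (proper, and not the intersection of two implicative filters both different from it). Sahlqvist quasiequations: formulas over variables with $\land,\lor,\to,\lnot,0,1$; a variable occurrence is positive (negative) if the number of negations and implication antecedents in whose scope it lies is even (odd); positive/negative formulas have all occurrences so. Sahlqvist antecedent: built from variables, negative formulas, $0,1$ by $\land,\lor$. Sahlqvist implication: positive formula, or $\lnot\varphi$ with $\varphi$ a Sahlqvist antecedent, or $\varphi\to\psi$ with $\varphi$ a Sahlqvist antecedent and $\psi$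 positive. $\Phi=\varphi_1\land y\le z\,\&\cdots\&\,\varphi_m\land y\le z\Longrightarrow y\le z$, $y,z$ distinct variables not occurring in the $\varphi_i$, each $\varphi_i$ built from Sahlqvist implications by $\land,\lor$; $a\le b$ means $a\land b\approx a$; $\Phi$ is in $\mathcal{L}_\to$ if the $\varphi_i$ only use symbols from $\mathcal{L}_\to$. For each such formula $\varphi(x_1..x_n)$ and $k\ge1$, $\boldsymbol{\varphi}^k$ is the finite set of $\mathsf{IPC}$ formulas defined by: $\boldsymbol{x_m}^k=\{x_m^1..x_m^k\}$; $\boldsymbol{1}^k=\{\top(x_1^1)\}$ with $\top(x)=x\to x$; $\boldsymbol{0}^k=\{x_1^1, x_1^1\to0\}$; $(\boldsymbol{\psi\land\chi})^k=\boldsymbol{\psi}^k\cup\boldsymbol{\chi}^k$; with $\boldsymbol{\psi}^k=\{\psi_1..\psi_p\}$, $\boldsymbol{\chi}^k=\{\chi_1..\chi_t\}$: $(\boldsymbol{\lnot\psi})^k=\{\psi_1\to(\psi_2\to(\cdots(\psi_p\to0)\cdots))\}$, $(\boldsymbol{\psi\to\chi})^k=\{\psi_1\to(\cdots(\psi_p\to\chi_j)\cdots):j\le t\}$, $(\boldsymbol{\psi\lor\chi})^k=\{\psi_i\lor\chi_j:i\le p,j\le t\}$. For a finite set $\Gamma=\{\gamma_1..\gamma_n\}$ and formula $\varphi$, $\Gamma\to\varphi$ denotes $\{\gamma_1\to(\gamma_2\to(\cdots(\gamma_n\to\varphi)\cdots))\}$ (and for a union of such singletons $\Sigma$, $\Sigma\to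 y$ is defined likewise). Then $\mathsf{A}(\Phi)=\bigcup_{k\ge1}\big(((\boldsymbol{\varphi_1}^k\to y)\cup\cdots\cup(\boldsymbol{\varphi_m}^k\to y))\to y\big)$, with $y$ a variable not occurring in the $\boldsymbol{\varphi_i}^k$. $\mathsf{Up}(\mathbb{X})$ is the Heyting algebra of upsets of a poset ($\cap,\cup$, $U\to V=X\smallsetminus{\downarrow}(U\smallsetminus V)$, $\emptyset$, $X$), and $\mathsf{tr}(\Phi)$ is the effectively computable first-order sentence in the language of posets such that for every poset $\mathbb{X}$, $\mathsf{Up}(\mathbb{X})\vDash\Phi$ iff $\mathbb{X}\vDash\mathsf{tr}(\Phi)$. *)

theory Defs
  imports Main
begin

datatype opsym = Meet | Join | Imp | Neg | Zero | One

datatype 'v fm = Var 'v | Top | Bot | And "'v fm" "'v fm" | Or "'v fm" "'v fm"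
  | Impl "'v fm" "'v fm" | Not "'v fm"

fun syms :: "'v fm \<Rightarrow> opsym set" where
  "syms (Var x) = {}"
| "syms Top = {One}"
| "syms Bot = {Zero}"
| "syms (And a b) = insert Meet (syms a \<union> syms b)"
| "syms (Or a b) = insert Join (syms a \<union> syms b)"
| "syms (Impl a b) = insert Imp (syms a \<union> syms b)"
| "syms (Not a) = insert Neg (syms a)"

record 'a alg =
  car :: "'a set"
  mt :: "'a \<Rightarrow> 'a \<Rightarrow> 'a"
  jn :: "'a \<Rightarrow> 'a \<Rightarrow> 'a"
  im :: "'a \<Rightarrow> 'a \<Rightarrow> 'a"
  ng :: "'a \<Rightarrow> 'a"
  zr :: "'a"
  tp :: "'a"

fun eval :: "('a, 'c) alg_scheme \<Rightarrow> ('v \<Rightarrow> 'a) \<Rightarrow> 'v fm \<Rightarrow> 'a" where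
  "eval A v (Var x) = v x"
| "eval A v Top = tp A"
| "eval A v Bot = zr A"
| "eval A v (And a b) = mt A (eval A v a) (eval A v b)"
| "eval A v (Or a b) = jn A (eval A v a) (eval A v b)"
| "eval A v (Impl a b) = im A (eval A v a) (eval A v b)"
| "eval A v (Not a) = ng A (eval A v a)"

definition hle :: "'a alg \<Rightarrow> 'a \<Rightarrow> 'a \<Rightarrow> bool" where
  "hle H a b \<longleftrightarrow> mt H a b = a"

definition heyting :: "'a alg \<Rightarrow> bool" where
  "heyting H \<longleftrightarrow>
     zr H \<in> car H \<and> tp H \<in> car H \<and>
     (\<forall>a\<in>car H. \<forall>b\<in>car H. mt H a b \<in> car H \<and> jn H a b \<in> car H \<and> im H a b \<in> car H) \<and>
     (\<forall>a\<in>car H. ng H a \<in> car H) \<and>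
     (\<forall>a\<in>car H. \<forall>b\<in>car H. mt H a b = mt H b a \<and> jn H a b = jn H b a \<and>
        mt H a (jn H a b) = a \<and> jn H a (mt H a b) = a) \<and>
     (\<forall>a\<in>car H. \<forall>b\<in>car H. \<forall>c\<in>car H.
        mt H a (mt H b c) = mt H (mt H a b) c \<and> jn H a (jn H b c) = jn H (jn H a b) c) \<and>
     (\<forall>a\<in>car H. jn H a (zr H) = a \<and> mt H a (tp H) = a) \<and>
     (\<forall>a\<in>car H. \<forall>b\<in>car H. \<forall>c\<in>car H. hle H (mt H c a) b \<longleftrightarrow> hle H c (im H a b)) \<and>
     (\<forall>a\<in>car H. ng H a = im H a (zr H))"

definition closed_under :: "opsym set \<Rightarrow> 'a alg \<Rightarrow> 'a set \<Rightarrow> bool" where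
  "closed_under L A S \<longleftrightarrow>
     (Meet \<in> L \<longrightarrow> (\<forall>a\<in>S. \<forall>b\<in>S. mt A a b \<in> S)) \<and>
     (Join \<in> L \<longrightarrow> (\<forall>a\<in>S. \<forall>b\<in>S. jn A a b \<in> S)) \<and>
     (Imp \<in> L \<longrightarrow> (\<forall>a\<in>S. \<forall>b\<in>S. im A a b \<in> S)) \<and>
     (Neg \<in> L \<longrightarrow> (\<forall>a\<in>S. ng A a \<in> S)) \<and>
     (Zero \<in> L \<longrightarrow> zr A \<in> S) \<and>
     (One \<in> L \<longrightarrow> tp A \<in> S)"

text \<open>The \<open>L\<close>-subreduct of the Heyting algebra \<open>H\<close> with universe \<open>S\<close>; its operations
  are those of \<open>H\<close> restricted to \<open>S\<close>.\<close>
definition subreduct :: "opsym set \<Rightarrow> 'a alg \<Rightarrow> 'a set \<Rightarrow> bool" where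
  "subreduct L H S \<longleftrightarrow> heyting H \<and> S \<subseteq> car H \<and> closed_under L H S"

definition valid_in :: "'a alg \<Rightarrow> 'a set \<Rightarrow> 'v fm \<Rightarrow> bool" where
  "valid_in H S \<phi> \<longleftrightarrow> (\<forall>v. (\<forall>x. v x \<in> S) \<longrightarrow> eval H v \<phi> = tp H)"

text \<open>Variety generated by the subreduct \<open>(H,S)\<close> (as an \<open>L\<close>-algebra): the class of
  \<open>L\<close>-algebras satisfying every \<open>L\<close>-equation valid in it.\<close>
definition variety :: "opsym set \<Rightarrow> 'a alg \<Rightarrow> 'a set \<Rightarrow> 'b alg set" where
  "variety L H S = {B. closed_under L B (car B) \<and>
     (\<forall>s t :: nat fm. syms s \<subseteq> L \<longrightarrow> syms t \<subseteq> L \<longrightarrow>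
        (\<forall>v. (\<forall>x. v x \<in> S) \<longrightarrow> eval H v s = eval H v t) \<longrightarrow>
        (\<forall>w. (\<forall>x. w x \<in> car B) \<longrightarrow> eval B w s = eval B w t))}"

definition impl_filter :: "'b alg \<Rightarrow> 'b set \<Rightarrow> bool" where
  "impl_filter B F \<longleftrightarrow> F \<subseteq> car B \<and> (\<forall>a\<in>car B. im B a a \<in> F) \<and>
     (\<forall>a b. a \<in> F \<longrightarrow> im B a b \<in> F \<longrightarrow> b \<in> car B \<longrightarrow> b \<in> F)"

definition meet_irreducible :: "'b alg \<Rightarrow> 'b set \<Rightarrow> bool" where
  "meet_irreducible B F \<longleftrightarrow> impl_filter B F \<and> F \<noteq> car B \<and>
     \<not> (\<exists>G1 G2. impl_filter B G1 \<and> impl_filter B G2 \<and> G1 \<noteq> F \<and> G2 \<noteq> F \<and> F = G1 \<inter> G2)"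

text \<open>\<open>B\<^sub>*\<close>, ordered by inclusion.\<close>
definition Bstar :: "'b alg \<Rightarrow> 'b set set" where
  "Bstar B = {F. meet_irreducible B F}"

definition is_upset :: "'x set \<Rightarrow> ('x \<Rightarrow> 'x \<Rightarrow> bool) \<Rightarrow> 'x set \<Rightarrow> bool" where
  "is_upset X le U \<longleftrightarrow> U \<subseteq> X \<and> (\<forall>x\<in>U. \<forall>y\<in>X. le x y \<longrightarrow> y \<in> U)"

definition downset :: "'x set \<Rightarrow> ('x \<Rightarrow> 'x \<Rightarrow> bool) \<Rightarrow> 'x set \<Rightarrow> 'x set" where
  "downset X le U = {x\<in>X. \<exists>u\<in>U. le x u}"

definition Up :: "'x set \<Rightarrow> ('x \<Rightarrow> 'x \<Rightarrow> bool) \<Rightarrow> 'x set alg" where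
  "Up X le = \<lparr> car = {U. is_upset X le U}, mt = (\<inter>), jn = (\<union>),
     im = (\<lambda>U V. X - downset X le (U - V)),
     ng = (\<lambda>U. X - downset X le U), zr = {}, tp = X \<rparr>"

fun pos :: "'v fm \<Rightarrow> bool" and neg :: "'v fm \<Rightarrow> bool" where
  "pos (Var x) = True"
| "neg (Var x) = False"
| "pos Top = True"
| "neg Top = True"
| "pos Bot = True"
| "neg Bot = True"
| "pos (And a b) = (pos a \<and> pos b)"
| "neg (And a b) = (neg a \<and> neg b)"
| "pos (Or a b) = (pos a \<and> pos b)"
| "neg (Or a b) = (neg a \<and> neg b)"
| "pos (Impl a b) = (neg a \<and> pos b)"
| "neg (Impl a b) = (pos a \<and> neg b)"
| "pos (Not a) = neg a"
| "neg (Not a) = pos a"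

inductive sahl_ant :: "'v fm \<Rightarrow> bool" where
  "sahl_ant (Var x)"
| "neg \<phi> \<Longrightarrow> sahl_ant \<phi>"
| "sahl_ant Bot"
| "sahl_ant Top"
| "sahl_ant a \<Longrightarrow> sahl_ant b \<Longrightarrow> sahl_ant (And a b)"
| "sahl_ant a \<Longrightarrow> sahl_ant b \<Longrightarrow> sahl_ant (Or a b)"

inductive sahl_imp :: "'v fm \<Rightarrow> bool" where
  "pos \<phi> \<Longrightarrow> sahl_imp \<phi>"
| "sahl_ant \<phi> \<Longrightarrow> sahl_imp (Not \<phi>)"
| "sahl_ant \<phi> \<Longrightarrow> pos \<psi> \<Longrightarrow> sahl_imp (Impl \<phi> \<psi>)"

inductive sahl_comb :: "'v fm \<Rightarrow> bool" where
  "sahl_imp \<phi> \<Longrightarrow> sahl_comb \<phi>"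
| "sahl_comb a \<Longrightarrow> sahl_comb b \<Longrightarrow> sahl_comb (And a b)"
| "sahl_comb a \<Longrightarrow> sahl_comb b \<Longrightarrow> sahl_comb (Or a b)"

text \<open>A Sahlqvist quasiequation
  \<open>\<phi>\<^sub>1 \<and> y \<le> z & \<dots> & \<phi>\<^sub>m \<and> y \<le> z \<Longrightarrow> y \<le> z\<close> in the language \<open>L\<close> is represented by
  the list \<open>[\<phi>\<^sub>1, \<dots>, \<phi>\<^sub>m]\<close>; the variables \<open>y, z\<close> are kept separate from the variables
  (natural numbers) of the \<open>\<phi>\<^sub>i\<close>.\<close>
definition sahlqvist_quasi :: "opsym set \<Rightarrow> nat fm list \<Rightarrow> bool" where
  "sahlqvist_quasi L phis \<longleftrightarrow> phis \<noteq> [] \<and> (\<forall>\<phi>\<in>set phis. sahl_comb \<phi> \<and> syms \<phi> \<subseteq> L)"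

definition Up_sat :: "'x set \<Rightarrow> ('x \<Rightarrow> 'x \<Rightarrow> bool) \<Rightarrow> nat fm list \<Rightarrow> bool" where
  "Up_sat X le phis \<longleftrightarrow>
     (\<forall>v Y Z. (\<forall>n. is_upset X le (v n)) \<longrightarrow> is_upset X le Y \<longrightarrow> is_upset X le Z \<longrightarrow>
        (\<forall>\<phi>\<in>set phis. eval (Up X le) v \<phi> \<inter> Y \<subseteq> Z) \<longrightarrow> Y \<subseteq> Z)"

fun imps :: "'v fm list \<Rightarrow> 'v fm \<Rightarrow> 'v fm" where
  "imps [] c = c"
| "imps (a # as) c = Impl a (imps as c)"

text \<open>\<open>bold k \<phi>\<close> is \<open>\<phi>\<^sup>k\<close>: variable \<open>x\<^sub>m\<^sup>j\<close> is \<open>Some (m, j)\<close>; \<open>None\<close> is reserved for \<open>y\<close>.\<close>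
fun bold :: "nat \<Rightarrow> nat fm \<Rightarrow> (nat \<times> nat) option fm list" where
  "bold k (Var m) = map (\<lambda>j. Var (Some (m, j))) [1..<Suc k]"
| "bold k Top = [Impl (Var (Some (1,1))) (Var (Some (1,1)))]"
| "bold k Bot = [Var (Some (1,1)), Impl (Var (Some (1,1))) Bot]"
| "bold k (And a b) = bold k a @ bold k b"
| "bold k (Not a) = [imps (bold k a) Bot]"
| "bold k (Impl a b) = map (\<lambda>c. imps (bold k a) c) (bold k b)"
| "bold k (Or a b) = concat (map (\<lambda>p. map (\<lambda>c. Or p c) (bold k b)) (bold k a))"

definition A_Phi :: "nat fm list \<Rightarrow> (nat \<times> nat) option fm set" where
  "A_Phi phis = {imps (map (\<lambda>\<phi>. imps (bold k \<phi>) (Var None)) phis) (Var None) | k. k \<ge> 1}"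

end

theory Submission
  imports Defs "HOL-Library.Countable"
begin

text \<open>
  Both directions rest on the map \<open>emb c = {P \<in> B\<^sub>*. c \<in> P}\<close>, a homomorphism of
  \<open>\<L>\<^sub>\<rightarrow>\<close>-algebras from \<open>B\<close> into \<open>Up(B\<^sub>*)\<close> which is injective because meet irreducible
  implicative filters separate elements (Zorn's lemma).

  If \<open>Up(B\<^sub>*)\<close> refutes \<open>\<Phi>\<close> at a point \<open>F\<close>, the Sahlqvist shape of the premises lets us shrink
  the refuting valuation, first to one whose values are upward closures of finitely many points,
  i.e. of the form \<open>{P. D \<subseteq> P}\<close> for sets \<open>D\<close> of elements, and then by a compactness argument
  (Esakia's lemma) to one with finite sets \<open>D\<close>. Listing these finitely many elements as
  \<open>x\<^sub>m\<^sup>1, \<dots>, x\<^sub>m\<^sup>k\<close> refutes the \<open>k\<close>-th member of \<open>\<A>(\<Phi>)\<close> in \<open>B\<close>, once \<open>y\<close> is sent to an element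
  \<open>y \<notin> F\<close> with \<open>c \<rightarrow> y \<in> F\<close> for the finitely many elements \<open>c\<close> standing for the premises; such
  a \<open>y\<close> exists because \<open>F\<close> is meet irreducible. As \<open>\<A>(\<Phi>)\<close> consists of \<open>\<L>\<^sub>\<rightarrow>\<close>-equations,
  its validity passes from \<open>A\<close> to every \<open>B \<in> \<V>(A)\<close>.

  Conversely, \<open>emb\<close> maps a member of \<open>\<A>(\<Phi>)\<close> evaluated in \<open>A\<close> to the same formula
  evaluated in \<open>Up(A\<^sub>*)\<close>, which validates \<open>\<Phi>\<close> and hence \<open>\<A>(\<Phi>)\<close>; injectivity of \<open>emb\<close> gives
  the value \<open>1\<close> in \<open>A\<close>.
\<close>

section \<open>Arithmetic in Heyting algebras\<close>

context
  fixes H :: "'a alg"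
  assumes heyting_H: "heyting H"
begin

lemma heyting_closed: "zr H \<in> car H" "tp H \<in> car H"
  "a \<in> car H \<Longrightarrow> b \<in> car H \<Longrightarrow> mt H a b \<in> car H"
  "a \<in> car H \<Longrightarrow> b \<in> car H \<Longrightarrow> jn H a b \<in> car H"
  "a \<in> car H \<Longrightarrow> b \<in> car H \<Longrightarrow> im H a b \<in> car H"
  "a \<in> car H \<Longrightarrow> ng H a \<in> car H"
  using heyting_H unfolding heyting_def by auto

lemma heyting_lattice_laws: "\<forall>a\<in>car H. \<forall>b\<in>car H. mt H a b = mt H b a \<and> jn H a b = jn H b a \<and>
        mt H a (jn H a b) = a \<and> jn H a (mt H a b) = a"
  using heyting_H unfolding heyting_def by (elim conjE) assumption

lemma heyting_assoc_laws: "\<forall>a\<in>car H. \<forall>b\<in>car H. \<forall>c\<in>car H.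
        mt H a (mt H b c) = mt H (mt H a b) c \<and> jn H a (jn H b c) = jn H (jn H a b) c"
  using heyting_H unfolding heyting_def by (elim conjE) assumption

lemma heyting_bound_laws: "\<forall>a\<in>car H. jn H a (zr H) = a \<and> mt H a (tp H) = a"
  using heyting_H unfolding heyting_def by (elim conjE) assumption

lemma heyting_residuation_law:
  "\<forall>a\<in>car H. \<forall>b\<in>car H. \<forall>c\<in>car H. hle H (mt H c a) b \<longleftrightarrow> hle H c (im H a b)"
  using heyting_H unfolding heyting_def by (elim conjE) assumption

lemma heyting_neg_law: "\<forall>a\<in>car H. ng H a = im H a (zr H)"
  using heyting_H unfolding heyting_def by (elim conjE) assumption

lemma heyting_meet_commute: "a \<in> car H \<Longrightarrow> b \<in> car H \<Longrightarrow> mt H a b = mt H b a"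
  using heyting_lattice_laws by simp

lemma heyting_join_commute: "a \<in> car H \<Longrightarrow> b \<in> car H \<Longrightarrow> jn H a b = jn H b a"
  using heyting_lattice_laws by simp

lemma heyting_meet_absorb: "a \<in> car H \<Longrightarrow> b \<in> car H \<Longrightarrow> mt H a (jn H a b) = a"
  using heyting_lattice_laws by simp

lemma heyting_join_absorb: "a \<in> car H \<Longrightarrow> b \<in> car H \<Longrightarrow> jn H a (mt H a b) = a"
  using heyting_lattice_laws by simp

lemma heyting_meet_assoc:
  "a \<in> car H \<Longrightarrow> b \<in> car H \<Longrightarrow> c \<in> car H \<Longrightarrow> mt H a (mt H b c) = mt H (mt H a b) c"
  using heyting_assoc_laws by simp

lemma heyting_join_assoc:
  "a \<in> car H \<Longrightarrow> b \<in> car H \<Longrightarrow> c \<in> car H \<Longrightarrow> jn H a (jn H b c) = jn H (jn H a b) c"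
  using heyting_assoc_laws by simp

lemma heyting_join_zero: "a \<in> car H \<Longrightarrow> jn H a (zr H) = a"
  using heyting_bound_laws by simp

lemma heyting_meet_top: "a \<in> car H \<Longrightarrow> mt H a (tp H) = a"
  using heyting_bound_laws by simp

lemma heyting_residuation:
  "a \<in> car H \<Longrightarrow> b \<in> car H \<Longrightarrow> c \<in> car H \<Longrightarrow> hle H (mt H c a) b \<longleftrightarrow> hle H c (im H a b)"
  using heyting_residuation_law by blast

lemma heyting_neg: "a \<in> car H \<Longrightarrow> ng H a = im H a (zr H)"
  using heyting_neg_law by simp

lemma heyting_meet_idem: "a \<in> car H \<Longrightarrow> mt H a a = a"
proof -
  assume a: "a \<in> car H"
  have c: "mt H a a \<in> car H" using heyting_closed(3)[OF a a] .
  have "jn H a (mt H a a) = a" using heyting_join_absorb[OF a a] .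
  then have "mt H a a = mt H a (jn H a (mt H a a))" by simp
  also have "\<dots> = a" using heyting_meet_absorb[OF a c] .
  finally show ?thesis .
qed

lemma hle_refl: "a \<in> car H \<Longrightarrow> hle H a a"
  by (simp add: hle_def heyting_meet_idem)

lemma hle_antisym: "a \<in> car H \<Longrightarrow> b \<in> car H \<Longrightarrow> hle H a b \<Longrightarrow> hle H b a \<Longrightarrow> a = b"
  unfolding hle_def
proof -
  assume a: "a \<in> car H" "b \<in> car H" "mt H a b = a" "mt H b a = b"
  show "a = b" using a(3,4) heyting_meet_commute[OF a(1,2)] by simp
qed

lemma hle_trans: "a \<in> car H \<Longrightarrow> b \<in> car H \<Longrightarrow> c \<in> car H \<Longrightarrow> hle H a b \<Longrightarrow> hle H b c \<Longrightarrow> hle H a c"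
  unfolding hle_def
proof -
  assume a: "a \<in> car H" "b \<in> car H" "c \<in> car H" "mt H a b = a" "mt H b c = b"
  have "mt H a c = mt H (mt H a b) c" using a by simp
  also have "\<dots> = mt H a (mt H b c)" using heyting_meet_assoc[OF a(1-3)] by simp
  also have "\<dots> = a" using a by simp
  finally show "mt H a c = a" .
qed

lemma hle_meet1: "a \<in> car H \<Longrightarrow> b \<in> car H \<Longrightarrow> hle H (mt H a b) a"
  unfolding hle_def
proof -
  assume a: "a \<in> car H" "b \<in> car H"
  have "mt H (mt H a b) a = mt H a (mt H a b)" using heyting_meet_commute[OF heyting_closed(3)[OF a] a(1)] .
  also have "\<dots> = mt H (mt H a a) b" using heyting_meet_assoc[OF a(1) a(1) a(2)] .
  also have "\<dots> = mt H a b" using heyting_meet_idem a by simp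
  finally show "mt H (mt H a b) a = mt H a b" .
qed

lemma hle_meet2: "a \<in> car H \<Longrightarrow> b \<in> car H \<Longrightarrow> hle H (mt H a b) b"
proof -
  assume a: "a \<in> car H" "b \<in> car H"
  show ?thesis using hle_meet1[OF a(2,1)] heyting_meet_commute[OF a] by simp
qed

lemma hle_meetI: "a \<in> car H \<Longrightarrow> b \<in> car H \<Longrightarrow> c \<in> car H \<Longrightarrow> hle H c a \<Longrightarrow> hle H c b \<Longrightarrow> hle H c (mt H a b)"
  unfolding hle_def using heyting_meet_assoc[of c a b] by simp

lemma hle_join1: "a \<in> car H \<Longrightarrow> b \<in> car H \<Longrightarrow> hle H a (jn H a b)"
  unfolding hle_def by (simp add: heyting_meet_absorb)

lemma hle_join2: "a \<in> car H \<Longrightarrow> b \<in> car H \<Longrightarrow> hle H b (jn H a b)"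
proof -
  assume a: "a \<in> car H" "b \<in> car H"
  show ?thesis using hle_join1[OF a(2,1)] heyting_join_commute[OF a] by simp
qed

lemma hle_iff_join: assumes a: "a \<in> car H" "b \<in> car H" shows "hle H a b \<longleftrightarrow> jn H a b = b"
proof
  assume "hle H a b"
  then have m: "mt H a b = a" unfolding hle_def .
  have "jn H a b = jn H b a" using heyting_join_commute[OF a(1,2)] .
  also have "\<dots> = jn H b (mt H b a)" using m heyting_meet_commute[OF a(1,2)] by simp
  also have "\<dots> = b" using heyting_join_absorb a by simp
  finally show "jn H a b = b" .
next
  assume j: "jn H a b = b"
  show "hle H a b" unfolding hle_def using heyting_meet_absorb[OF a(1,2)] j by simp
qed

lemma hle_joinI: assumes a: "a \<in> car H" "b \<in> car H" "c \<in> car H" "hle H a c" "hle H b c"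
  shows "hle H (jn H a b) c"
proof -
  have 1: "jn H a c = c" using a(4) hle_iff_join[OF a(1,3)] by simp
  have 2: "jn H b c = c" using a(5) hle_iff_join[OF a(2,3)] by simp
  have "jn H (jn H a b) c = c" using heyting_join_assoc[OF a(1-3)] 1 2 by simp
  then show ?thesis using hle_iff_join[OF heyting_closed(4)[OF a(1,2)] a(3)] by simp
qed

lemma hle_zero: assumes a: "a \<in> car H" shows "hle H (zr H) a"
proof -
  have "jn H (zr H) a = a" using heyting_join_commute[OF heyting_closed(1) a] heyting_join_zero[OF a] by simp
  then show ?thesis unfolding hle_def using heyting_meet_absorb[OF heyting_closed(1) a] by simp
qed

lemma hle_top: "a \<in> car H \<Longrightarrow> hle H a (tp H)"
  unfolding hle_def by (simp add: heyting_meet_top)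

lemma heyting_top_meet: "a \<in> car H \<Longrightarrow> mt H (tp H) a = a"
  using heyting_meet_commute[OF heyting_closed(2)] heyting_meet_top by simp

lemma hle_modus_ponens: assumes a: "a \<in> car H" "b \<in> car H" shows "hle H (mt H a (im H a b)) b"
proof -
  have c: "im H a b \<in> car H" using heyting_closed(5)[OF a] .
  have "hle H (mt H (im H a b) a) b" using heyting_residuation[OF a c] hle_refl[OF c] by simp
  then show ?thesis using heyting_meet_commute[OF a(1) c] by simp
qed

lemma hle_meet_mono: assumes a: "a \<in> car H" "b \<in> car H" "c \<in> car H" "hle H a b"
  shows "hle H (mt H a c) (mt H b c)"
proof -
  have ac: "mt H a c \<in> car H" using heyting_closed(3)[OF a(1,3)] .
  have "hle H (mt H a c) b" using hle_trans[OF ac a(1,2) hle_meet1[OF a(1,3)] a(4)] .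
  then show ?thesis using hle_meetI[OF a(2,3) ac] hle_meet2[OF a(1,3)] by simp
qed

lemma heyting_imp_eq_top: assumes a: "a \<in> car H" "b \<in> car H" shows "im H a b = tp H \<longleftrightarrow> hle H a b"
proof
  assume i: "im H a b = tp H"
  then have "hle H (tp H) (im H a b)" by (simp add: hle_refl heyting_closed)
  then have "hle H (mt H (tp H) a) b" using heyting_residuation[OF a heyting_closed(2)] by simp
  then show "hle H a b" using heyting_top_meet[OF a(1)] by simp
next
  assume "hle H a b"
  then have "hle H (mt H (tp H) a) b" using heyting_top_meet[OF a(1)] by simp
  then have "hle H (tp H) (im H a b)" using heyting_residuation[OF a heyting_closed(2)] by simp
  then show "im H a b = tp H" using hle_antisym[OF heyting_closed(5)[OF a] heyting_closed(2)]
      hle_top[OF heyting_closed(5)[OF a]] by simp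
qed

lemma heyting_imp_refl: "a \<in> car H \<Longrightarrow> im H a a = tp H"
  by (simp add: heyting_imp_eq_top hle_refl)

lemma heyting_imp_imp_refl: "a \<in> car H \<Longrightarrow> c \<in> car H \<Longrightarrow> im H a (im H c c) = im H c c"
  by (simp add: heyting_imp_refl heyting_imp_eq_top heyting_closed(2) hle_top)

lemma heyting_imp_K: assumes a: "a \<in> car H" "b \<in> car H" shows "im H a (im H b a) = tp H"
proof -
  have "hle H (mt H a b) a" using hle_meet1[OF a] .
  then have "hle H a (im H b a)" using heyting_residuation[OF a(2,1,1)] by simp
  then show ?thesis using heyting_imp_eq_top[OF a(1) heyting_closed(5)[OF a(2,1)]] by simp
qed

lemma heyting_imp_S: assumes a: "a \<in> car H" "b \<in> car H" "c \<in> car H"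
  shows "im H (im H a (im H b c)) (im H (im H a b) (im H a c)) = tp H"
proof -
  define p where "p = im H a (im H b c)"
  define q where "q = im H a b"
  have bc: "im H b c \<in> car H" using heyting_closed(5)[OF a(2,3)] .
  have cp: "p \<in> car H" "q \<in> car H" unfolding p_def q_def using a heyting_closed bc by auto
  have 1: "hle H (mt H a p) (im H b c)" unfolding p_def using hle_modus_ponens[OF a(1) bc] .
  have 2: "hle H (mt H a q) b" unfolding q_def using hle_modus_ponens[OF a(1,2)] .
  define x where "x = mt H (mt H p q) a"
  have pq: "mt H p q \<in> car H" using heyting_closed(3)[OF cp] .
  have cx: "x \<in> car H" unfolding x_def using heyting_closed(3)[OF pq a(1)] .
  have ap: "mt H a p \<in> car H" using heyting_closed(3)[OF a(1) cp(1)] .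
  have aq: "mt H a q \<in> car H" using heyting_closed(3)[OF a(1) cp(2)] .
  have x1: "hle H x (mt H a p)"
  proof -
    have "hle H x (mt H p q)" unfolding x_def using hle_meet1[OF pq a(1)] .
    then have "hle H x p" using hle_trans[OF cx pq cp(1)] hle_meet1[OF cp] by simp
    moreover have "hle H x a" unfolding x_def using hle_meet2[OF pq a(1)] .
    ultimately show ?thesis using hle_meetI[OF a(1) cp(1) cx] by simp
  qed
  have x2: "hle H x (mt H a q)"
  proof -
    have "hle H x (mt H p q)" unfolding x_def using hle_meet1[OF pq a(1)] .
    then have "hle H x q" using hle_trans[OF cx pq cp(2)] hle_meet2[OF cp] by simp
    moreover have "hle H x a" unfolding x_def using hle_meet2[OF pq a(1)] .
    ultimately show ?thesis using hle_meetI[OF a(1) cp(2) cx] by simp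
  qed
  have xb: "hle H x b" using hle_trans[OF cx aq a(2) x2 2] .
  have xbc: "hle H x (im H b c)" using hle_trans[OF cx ap bc x1 1] .
  have "hle H x (mt H b (im H b c))" using hle_meetI[OF a(2) bc cx] xb xbc by simp
  then have "hle H x c" using hle_trans[OF cx heyting_closed(3)[OF a(2) bc] a(3)]
      hle_modus_ponens[OF a(2,3)] by simp
  then have "hle H (mt H p q) (im H a c)" unfolding x_def using heyting_residuation[OF a(1,3) pq] by simp
  then have "hle H p (im H q (im H a c))" using heyting_residuation[OF cp(2) heyting_closed(5)[OF
      a(1,3)] cp(1)] by simp
  then show ?thesis unfolding p_def[symmetric] q_def[symmetric]
    using heyting_imp_eq_top[OF cp(1) heyting_closed(5)[OF cp(2) heyting_closed(5)[OF a(1,3)]]] by simp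
qed

lemma heyting_top_imp: assumes a: "a \<in> car H" shows "im H (tp H) a = a"
proof -
  have c: "im H (tp H) a \<in> car H" using heyting_closed(5)[OF heyting_closed(2) a] .
  have "hle H (mt H (tp H) (im H (tp H) a)) a" using hle_modus_ponens[OF heyting_closed(2) a] .
  then have 1: "hle H (im H (tp H) a) a" using heyting_top_meet[OF c] by simp
  have "hle H (mt H a (tp H)) a" using heyting_meet_top[OF a] hle_refl[OF a] by simp
  then have 2: "hle H a (im H (tp H) a)" using heyting_residuation[OF heyting_closed(2) a a] by simp
  show ?thesis using hle_antisym[OF c a 1 2] .
qed

lemma heyting_meet_imp: assumes a: "a \<in> car H" "b \<in> car H"
  shows "im H (mt H a b) a = tp H" "im H (mt H a b) b = tp H"
    "im H a (im H b (mt H a b)) = tp H"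
proof -
  have ab: "mt H a b \<in> car H" using heyting_closed(3)[OF a] .
  show "im H (mt H a b) a = tp H" using heyting_imp_eq_top[OF ab a(1)] hle_meet1[OF a] by simp
  show "im H (mt H a b) b = tp H" using heyting_imp_eq_top[OF ab a(2)] hle_meet2[OF a] by simp
  have "hle H (mt H a b) (mt H a b)" using hle_refl[OF ab] .
  then have "hle H a (im H b (mt H a b))" using heyting_residuation[OF a(2) ab a(1)] by simp
  then show "im H a (im H b (mt H a b)) = tp H" using heyting_imp_eq_top[OF a(1)
      heyting_closed(5)[OF a(2) ab]] by simp
qed

lemma hle_meet_join_distrib: assumes a: "x \<in> car H" "a \<in> car H" "b \<in> car H"
  shows "hle H (mt H x (jn H a b)) (jn H (mt H x a) (mt H x b))"
proof -
  define r where "r = jn H (mt H x a) (mt H x b)"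
  have xa: "mt H x a \<in> car H" using heyting_closed(3)[OF a(1,2)] .
  have xb: "mt H x b \<in> car H" using heyting_closed(3)[OF a(1,3)] .
  have cr: "r \<in> car H" unfolding r_def using heyting_closed(4)[OF xa xb] .
  have "hle H (mt H a x) r" unfolding r_def using heyting_meet_commute[OF a(1,2)] hle_join1[OF xa xb] by simp
  then have 1: "hle H a (im H x r)" using heyting_residuation[OF a(1) cr a(2)] by simp
  have "hle H (mt H b x) r" unfolding r_def using heyting_meet_commute[OF a(1,3)] hle_join2[OF xa xb] by simp
  then have 2: "hle H b (im H x r)" using heyting_residuation[OF a(1) cr a(3)] by simp
  have "hle H (jn H a b) (im H x r)" using hle_joinI[OF a(2,3) heyting_closed(5)[OF a(1) cr] 1 2] .
  then have "hle H (mt H (jn H a b) x) r" using heyting_residuation[OF a(1) cr heyting_closed(4)[OF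
      a(2,3)]] by simp
  then show ?thesis unfolding r_def[symmetric] using heyting_meet_commute[OF a(1)
      heyting_closed(4)[OF a(2,3)]] by simp
qed

lemma heyting_join_imp: assumes a: "a \<in> car H" "b \<in> car H"
  shows "im H a (jn H a b) = tp H" "im H b (jn H a b) = tp H"
  using heyting_imp_eq_top[OF a(1) heyting_closed(4)[OF a]] heyting_imp_eq_top[OF a(2)
    heyting_closed(4)[OF a]] hle_join1[OF a] hle_join2[OF a] by simp_all

lemma heyting_join_elim: assumes a: "a \<in> car H" "b \<in> car H" "c \<in> car H"
  shows "im H (im H a c) (im H (im H b c) (im H (jn H a b) c)) = tp H"
proof -
  define p where "p = im H a c"
  define q where "q = im H b c"
  define x where "x = mt H p q"
  have cp: "p \<in> car H" "q \<in> car H" unfolding p_def q_def using heyting_closed(5) a by auto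
  have cx: "x \<in> car H" unfolding x_def using heyting_closed(3)[OF cp] .
  have xa: "mt H x a \<in> car H" using heyting_closed(3)[OF cx a(1)] .
  have xb: "mt H x b \<in> car H" using heyting_closed(3)[OF cx a(2)] .
  have "hle H (mt H x a) (mt H p a)" unfolding x_def using hle_meet_mono[OF heyting_closed(3)[OF cp]
      cp(1) a(1) hle_meet1[OF cp]] .
  moreover have "hle H (mt H p a) c" unfolding p_def using hle_modus_ponens[OF a(1,3)]
      heyting_meet_commute[OF a(1) heyting_closed(5)[OF a(1,3)]] by simp
  ultimately have 1: "hle H (mt H x a) c" using hle_trans[OF xa heyting_closed(3)[OF cp(1) a(1)] a(3)] by simp
  have "hle H (mt H x b) (mt H q b)" unfolding x_def using hle_meet_mono[OF heyting_closed(3)[OF cp]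
      cp(2) a(2) hle_meet2[OF cp]] .
  moreover have "hle H (mt H q b) c" unfolding q_def using hle_modus_ponens[OF a(2,3)]
      heyting_meet_commute[OF a(2) heyting_closed(5)[OF a(2,3)]] by simp
  ultimately have 2: "hle H (mt H x b) c" using hle_trans[OF xb heyting_closed(3)[OF cp(2) a(2)] a(3)] by simp
  have "hle H (jn H (mt H x a) (mt H x b)) c" using hle_joinI[OF xa xb a(3) 1 2] .
  then have "hle H (mt H x (jn H a b)) c"
    using hle_trans[OF heyting_closed(3)[OF cx heyting_closed(4)[OF a(1,2)]] heyting_closed(4)[OF xa
      xb] a(3) hle_meet_join_distrib[OF cx a(1,2)]] by simp
  then have "hle H x (im H (jn H a b) c)" using heyting_residuation[OF heyting_closed(4)[OF a(1,2)]
      a(3) cx] by simp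
  then have "hle H p (im H q (im H (jn H a b) c))" unfolding x_def
    using heyting_residuation[OF cp(2) heyting_closed(5)[OF heyting_closed(4)[OF a(1,2)] a(3)] cp(1)] by simp
  then show ?thesis unfolding p_def[symmetric] q_def[symmetric]
    using heyting_imp_eq_top[OF cp(1) heyting_closed(5)[OF cp(2) heyting_closed(5)[OF
      heyting_closed(4)[OF a(1,2)] a(3)]]] by simp
qed

lemma heyting_neg_imp: assumes a: "a \<in> car H" "b \<in> car H"
  shows "im H a (im H (ng H a) b) = tp H"
proof -
  have n: "ng H a \<in> car H" using heyting_closed(6)[OF a(1)] .
  have an: "mt H a (ng H a) \<in> car H" using heyting_closed(3)[OF a(1) n] .
  have "hle H (mt H a (ng H a)) (zr H)" using hle_modus_ponens[OF a(1) heyting_closed(1)]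
      heyting_neg[OF a(1)] by simp
  then have "hle H (mt H a (ng H a)) b" using hle_trans[OF an heyting_closed(1) a(2)] hle_zero[OF a(2)] by simp
  then have "hle H a (im H (ng H a) b)" using heyting_residuation[OF n a(2) a(1)] by simp
  then show ?thesis using heyting_imp_eq_top[OF a(1) heyting_closed(5)[OF n a(2)]] by simp
qed

lemma heyting_neg_absurd: assumes a: "a \<in> car H"
  shows "im H (im H a (ng H a)) (ng H a) = tp H"
proof -
  define p where "p = im H a (ng H a)"
  have n: "ng H a \<in> car H" using heyting_closed(6)[OF a(1)] .
  have cp: "p \<in> car H" unfolding p_def using heyting_closed(5)[OF a n] .
  have pa: "mt H p a \<in> car H" using heyting_closed(3)[OF cp a] .
  have an: "mt H a (ng H a) \<in> car H" using heyting_closed(3)[OF a(1) n] .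
  have "hle H (mt H p a) (ng H a)" unfolding p_def using hle_modus_ponens[OF a n]
      heyting_meet_commute[OF a heyting_closed(5)[OF a n]] by simp
  moreover have "hle H (mt H p a) a" using hle_meet2[OF cp a] .
  ultimately have "hle H (mt H p a) (mt H a (ng H a))" using hle_meetI[OF a n pa] by simp
  moreover have "hle H (mt H a (ng H a)) (zr H)" using hle_modus_ponens[OF a(1) heyting_closed(1)]
      heyting_neg[OF a(1)] by simp
  ultimately have "hle H (mt H p a) (zr H)" using hle_trans[OF pa an heyting_closed(1)] by simp
  then have "hle H p (ng H a)" using heyting_residuation[OF a heyting_closed(1) cp] heyting_neg[OF a] by simp
  then show ?thesis unfolding p_def[symmetric] using heyting_imp_eq_top[OF cp n] by simp
qed

lemma heyting_zero_imp: "a \<in> car H \<Longrightarrow> im H (zr H) a = tp H"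
  by (simp add: heyting_imp_eq_top heyting_closed hle_zero)

end
section \<open>Members of the variety\<close>

lemma eval_closed: "closed_under L A C \<Longrightarrow> syms \<phi> \<subseteq> L \<Longrightarrow> \<forall>x. v x \<in> C \<Longrightarrow> eval A v \<phi> \<in> C"
  by (induction \<phi>) (auto simp: closed_under_def)

lemma heyting_eval_closed: "heyting H \<Longrightarrow> (\<forall>x. v x \<in> car H) \<Longrightarrow> eval H v \<phi> \<in> car H"
  by (induction \<phi>) (auto simp: heyting_closed)

definition val3 :: "'b \<Rightarrow> 'b \<Rightarrow> 'b \<Rightarrow> nat \<Rightarrow> 'b" where
  "val3 a b c n = (if n = 0 then a else if n = 1 then b else c)"

lemma val3_simps[simp]: "val3 a b c 0 = a" "val3 a b c (Suc 0) = b" "val3 a b c (Suc (Suc 0)) = c"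
  by (auto simp: val3_def)

lemma val3_in: "a \<in> C \<Longrightarrow> b \<in> C \<Longrightarrow> c \<in> C \<Longrightarrow> \<forall>x. val3 a b c x \<in> C"
  by (auto simp: val3_def)

locale variety_algebra =
  fixes L :: "opsym set" and H :: "'a alg" and S :: "'a set" and B :: "'b alg"
  assumes imp: "Imp \<in> L" and sub: "subreduct L H S" and var: "B \<in> variety L H S"
begin

lemma heyting_H: "heyting H" using sub unfolding subreduct_def by blast
lemma S_subset: "S \<subseteq> car H" using sub unfolding subreduct_def by blast
lemma B_closed: "closed_under L B (car B)" using var unfolding variety_def by blast

lemma variety_eq:
  fixes s t :: "nat fm"
  assumes "syms s \<subseteq> L" "syms t \<subseteq> L"
    and "\<And>v. \<forall>x. v x \<in> S \<Longrightarrow> eval H v s = eval H v t"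
    and "\<forall>x. w x \<in> car B"
  shows "eval B w s = eval B w t"
  using var assms unfolding variety_def by blast

lemma variety_eq_heyting:
  fixes s t :: "nat fm"
  assumes "syms s \<subseteq> L" "syms t \<subseteq> L"
    and "\<And>v. \<forall>x. v x \<in> car H \<Longrightarrow> eval H v s = eval H v t"
    and "\<forall>x. w x \<in> car B"
  shows "eval B w s = eval B w t"
  by (rule variety_eq[OF assms(1,2) _ assms(4)]) (use assms(3) S_subset in blast)

lemma B_imp_closed: "a \<in> car B \<Longrightarrow> b \<in> car B \<Longrightarrow> im B a b \<in> car B"
  using B_closed imp unfolding closed_under_def by blast
lemma B_meet_closed: "Meet \<in> L \<Longrightarrow> a \<in> car B \<Longrightarrow> b \<in> car B \<Longrightarrow> mt B a b \<in> car B"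
  using B_closed unfolding closed_under_def by blast
lemma B_join_closed: "Join \<in> L \<Longrightarrow> a \<in> car B \<Longrightarrow> b \<in> car B \<Longrightarrow> jn B a b \<in> car B"
  using B_closed unfolding closed_under_def by blast
lemma B_neg_closed: "Neg \<in> L \<Longrightarrow> a \<in> car B \<Longrightarrow> ng B a \<in> car B"
  using B_closed unfolding closed_under_def by blast
lemma B_zero_closed: "Zero \<in> L \<Longrightarrow> zr B \<in> car B"
  using B_closed unfolding closed_under_def by blast

text \<open>Each identity below is an \<open>L\<close>-equation valid in the Heyting algebra \<open>H\<close>, hence in \<open>B\<close>.\<close>

lemma B_imp_refl_eq: assumes "a \<in> car B" "b \<in> car B" shows "im B a a = im B b b"
  using variety_eq_heyting[of "Impl (Var 0) (Var 0)" "Impl (Var (Suc 0)) (Var (Suc 0))" "val3 a b b"]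
  by (simp add: imp heyting_imp_refl[OF heyting_H] val3_in assms)

lemma B_imp_imp_refl: assumes "a \<in> car B" "c \<in> car B" shows "im B a (im B c c) = im B c c"
  using variety_eq_heyting[of "Impl (Var 0) (Impl (Var (Suc 0)) (Var (Suc 0)))" "Impl (Var (Suc 0))
    (Var (Suc 0))" "val3 a c c"]
  by (simp add: imp heyting_imp_imp_refl[OF heyting_H] val3_in assms)

lemma B_imp_K: assumes "a \<in> car B" "b \<in> car B" shows "im B a (im B b a) = im B a a"
  using variety_eq_heyting[of "Impl (Var 0) (Impl (Var (Suc 0)) (Var 0))" "Impl (Var 0) (Var 0)" "val3 a b b"]
  by (simp add: imp heyting_imp_refl[OF heyting_H] heyting_imp_K[OF heyting_H] val3_in assms)

lemma B_imp_S: assumes "a \<in> car B" "b \<in> car B" "c \<in> car B"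
  shows "im B (im B a (im B b c)) (im B (im B a b) (im B a c)) = im B a a"
  using variety_eq_heyting[of "Impl (Impl (Var 0) (Impl (Var (Suc 0)) (Var (Suc (Suc 0))))) (Impl
    (Impl (Var 0) (Var (Suc 0))) (Impl (Var 0) (Var (Suc (Suc 0)))))"
      "Impl (Var 0) (Var 0)" "val3 a b c"]
  by (simp add: imp heyting_imp_refl[OF heyting_H] heyting_imp_S[OF heyting_H] val3_in assms)

lemma B_imp_refl_imp: assumes "a \<in> car B" "b \<in> car B" shows "im B (im B a a) b = b"
  using variety_eq_heyting[of "Impl (Impl (Var 0) (Var 0)) (Var (Suc 0))" "Var (Suc 0)" "val3 a b b"]
  by (simp add: imp heyting_imp_refl[OF heyting_H] heyting_top_imp[OF heyting_H] val3_in assms)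

lemma B_meet_imp: assumes "Meet \<in> L" "a \<in> car B" "b \<in> car B"
  shows "im B (mt B a b) a = im B a a" "im B (mt B a b) b = im B a a"
    "im B a (im B b (mt B a b)) = im B a a"
  using variety_eq_heyting[of "Impl (And (Var 0) (Var (Suc 0))) (Var 0)" "Impl (Var 0) (Var 0)" "val3 a b b"]
    variety_eq_heyting[of "Impl (And (Var 0) (Var (Suc 0))) (Var (Suc 0))" "Impl (Var 0) (Var 0)" "val3 a b b"]
    variety_eq_heyting[of "Impl (Var 0) (Impl (Var (Suc 0)) (And (Var 0) (Var (Suc 0))))" "Impl (Var
        0) (Var 0)" "val3 a b b"]
  by (simp_all add: imp heyting_imp_refl[OF heyting_H] heyting_meet_imp[OF heyting_H] val3_in assms)

lemma B_join_imp: assumes "Join \<in> L" "a \<in> car B" "b \<in> car B" "c \<in> car B"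
  shows "im B a (jn B a b) = im B a a" "im B b (jn B a b) = im B a a"
    "im B (im B a c) (im B (im B b c) (im B (jn B a b) c)) = im B a a"
  using variety_eq_heyting[of "Impl (Var 0) (Or (Var 0) (Var (Suc 0)))" "Impl (Var 0) (Var 0)" "val3 a b c"]
    variety_eq_heyting[of "Impl (Var (Suc 0)) (Or (Var 0) (Var (Suc 0)))" "Impl (Var 0) (Var 0)" "val3 a b c"]
    variety_eq_heyting[of "Impl (Impl (Var 0) (Var (Suc (Suc 0)))) (Impl (Impl (Var (Suc 0)) (Var
        (Suc (Suc 0)))) (Impl (Or (Var 0) (Var (Suc 0))) (Var (Suc (Suc 0)))))"
      "Impl (Var 0) (Var 0)" "val3 a b c"]
  by (simp_all add: imp heyting_imp_refl[OF heyting_H] heyting_join_imp[OF heyting_H]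
    heyting_join_elim[OF heyting_H] heyting_closed[OF heyting_H] val3_in assms)

lemma B_neg_imp: assumes "Neg \<in> L" "a \<in> car B" "b \<in> car B"
  shows "im B a (im B (ng B a) b) = im B a a" "im B (im B a (ng B a)) (ng B a) = im B a a"
  using variety_eq_heyting[of "Impl (Var 0) (Impl (Not (Var 0)) (Var (Suc 0)))" "Impl (Var 0) (Var
    0)" "val3 a b b"]
    variety_eq_heyting[of "Impl (Impl (Var 0) (Not (Var 0))) (Not (Var 0))" "Impl (Var 0) (Var 0)" "val3 a b b"]
  by (simp_all add: imp heyting_imp_refl[OF heyting_H] heyting_neg_imp[OF heyting_H]
    heyting_neg_absurd[OF heyting_H] val3_in assms)

lemma B_zero_imp: assumes "Zero \<in> L" "a \<in> car B"
  shows "im B (zr B) a = im B a a"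
  using variety_eq_heyting[of "Impl Bot (Var 0)" "Impl (Var 0) (Var 0)" "val3 a a a"]
  by (simp_all add: imp heyting_imp_refl[OF heyting_H] heyting_zero_imp[OF heyting_H] val3_in assms)

lemma B_top_eq: assumes "One \<in> L" "a \<in> car B"
  shows "tp B = im B a a"
  using variety_eq_heyting[of "Top" "Impl (Var 0) (Var 0)" "val3 a a a"]
  by (simp_all add: imp heyting_imp_refl[OF heyting_H] val3_in assms)

end
section \<open>Algebras of upsets\<close>

lemma Up_simps[simp]: "mt (Up X le) = (\<inter>)" "jn (Up X le) = (\<union>)"
  "im (Up X le) = (\<lambda>U V. X - downset X le (U - V))" "ng (Up X le) = (\<lambda>U. X - downset X le U)"
  "zr (Up X le) = {}" "tp (Up X le) = X" "car (Up X le) = {U. is_upset X le U}"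
  by (simp_all add: Up_def)

lemma eval_Up_simps[simp]:
  "eval (Up X le) v (Var x) = v x"
  "eval (Up X le) v Top = X"
  "eval (Up X le) v Bot = {}"
  "eval (Up X le) v (And a b) = eval (Up X le) v a \<inter> eval (Up X le) v b"
  "eval (Up X le) v (Or a b) = eval (Up X le) v a \<union> eval (Up X le) v b"
  "eval (Up X le) v (Impl a b) = X - downset X le (eval (Up X le) v a - eval (Up X le) v b)"
  "eval (Up X le) v (Not a) = X - downset X le (eval (Up X le) v a)"
  by (simp_all add: Up_def)

lemma mem_Up_imp: assumes "A \<subseteq> X"
  shows "x \<in> X - downset X (\<subseteq>) (A - C) \<longleftrightarrow> x \<in> X \<and> (\<forall>Q\<in>X. x \<subseteq> Q \<longrightarrow> Q \<in> A \<longrightarrow> Q \<in> C)"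
  using assms unfolding downset_def by blast

lemma mem_Up_neg: assumes "A \<subseteq> X"
  shows "x \<in> X - downset X (\<subseteq>) A \<longleftrightarrow> x \<in> X \<and> (\<forall>Q\<in>X. x \<subseteq> Q \<longrightarrow> Q \<notin> A)"
  using assms unfolding downset_def by blast

definition upset_val :: "'x set set \<Rightarrow> ('v \<Rightarrow> 'x set set) \<Rightarrow> bool" where
  "upset_val X v \<longleftrightarrow> (\<forall>n. is_upset X (\<subseteq>) (v n))"

lemma upset_eval: "upset_val X v \<Longrightarrow> is_upset X (\<subseteq>) (eval (Up X (\<subseteq>)) v \<phi>)"
proof (induction \<phi>)
  case (Var x)
  then show ?case by (simp add: upset_val_def)
next
  case Top
  then show ?case by (simp add: is_upset_def)
next
  case Bot
  then show ?case by (simp add: is_upset_def)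
next
  case (And a b)
  then show ?case by (simp add: is_upset_def) blast
next
  case (Or a b)
  then show ?case by (simp add: is_upset_def) blast
next
  case (Impl a b)
  then show ?case by (simp add: is_upset_def downset_def) blast
next
  case (Not a)
  then show ?case by (simp add: is_upset_def downset_def) blast
qed

lemma eval_Up_subset: "upset_val X v \<Longrightarrow> eval (Up X (\<subseteq>)) v \<phi> \<subseteq> X"
  using upset_eval unfolding is_upset_def by blast

lemma mem_eval_Impl: "upset_val X v \<Longrightarrow> x \<in> eval (Up X (\<subseteq>)) v (Impl a b) \<longleftrightarrow>
   x \<in> X \<and> (\<forall>Q\<in>X. x \<subseteq> Q \<longrightarrow> Q \<in> eval (Up X (\<subseteq>)) v a \<longrightarrow> Q \<in> eval (Up X (\<subseteq>)) v b)"
  using mem_Up_imp[OF eval_Up_subset] by simp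

lemma mem_eval_Not: "upset_val X v \<Longrightarrow> x \<in> eval (Up X (\<subseteq>)) v (Not a) \<longleftrightarrow>
   x \<in> X \<and> (\<forall>Q\<in>X. x \<subseteq> Q \<longrightarrow> Q \<notin> eval (Up X (\<subseteq>)) v a)"
  using mem_Up_neg[OF eval_Up_subset] by simp
lemma eval_Up_mono:
  assumes v: "upset_val X v" and v': "upset_val X v'" and le: "\<forall>n. v n \<subseteq> v' n"
  shows "(pos \<phi> \<longrightarrow> eval (Up X (\<subseteq>)) v \<phi> \<subseteq> eval (Up X (\<subseteq>)) v' \<phi>) \<and>
         (neg \<phi> \<longrightarrow> eval (Up X (\<subseteq>)) v' \<phi> \<subseteq> eval (Up X (\<subseteq>)) v \<phi>)"
proof (induction \<phi>)
  case (Var x)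
  then show ?case using le by simp
next
  case Top
  then show ?case by simp
next
  case Bot
  then show ?case by simp
next
  case (And a b)
  then show ?case by auto
next
  case (Or a b)
  then show ?case by auto
next
  case (Impl a b)
  show ?case
  proof (intro conjI impI subsetI)
    fix x assume p: "pos (Impl a b)" and x: "x \<in> eval (Up X (\<subseteq>)) v (Impl a b)"
    have na: "neg a" and pb: "pos b" using p by auto
    show "x \<in> eval (Up X (\<subseteq>)) v' (Impl a b)"
      using x Impl.IH na pb mem_eval_Impl[OF v, of x a b] mem_eval_Impl[OF v', of x a b] by blast
  next
    fix x assume p: "neg (Impl a b)" and x: "x \<in> eval (Up X (\<subseteq>)) v' (Impl a b)"
    have na: "pos a" and pb: "neg b" using p by auto
    show "x \<in> eval (Up X (\<subseteq>)) v (Impl a b)"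
      using x Impl.IH na pb mem_eval_Impl[OF v, of x a b] mem_eval_Impl[OF v', of x a b] by blast
  qed
next
  case (Not a)
  show ?case
  proof (intro conjI impI subsetI)
    fix x assume p: "pos (Not a)" and x: "x \<in> eval (Up X (\<subseteq>)) v (Not a)"
    have na: "neg a" using p by auto
    show "x \<in> eval (Up X (\<subseteq>)) v' (Not a)"
      using x Not.IH na mem_eval_Not[OF v, of x a] mem_eval_Not[OF v', of x a] by blast
  next
    fix x assume p: "neg (Not a)" and x: "x \<in> eval (Up X (\<subseteq>)) v' (Not a)"
    have na: "pos a" using p by auto
    show "x \<in> eval (Up X (\<subseteq>)) v (Not a)"
      using x Not.IH na mem_eval_Not[OF v, of x a] mem_eval_Not[OF v', of x a] by blast
  qed
qed
section \<open>Implicative filters and the poset \<open>B\<^sub>*\<close>\<close>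

context variety_algebra
begin

abbreviation sem :: "('v \<Rightarrow> 'b set set) \<Rightarrow> 'v fm \<Rightarrow> 'b set set" where
  "sem v \<phi> \<equiv> eval (Up (Bstar B) (\<subseteq>)) v \<phi>"

abbreviation is_filter where "is_filter F \<equiv> impl_filter B F"
abbreviation Bs where "Bs \<equiv> Bstar B"

text \<open>All elements \<open>a \<rightarrow> a\<close> coincide (\<open>B_imp_refl_eq\<close>); \<open>one\<close> is junk if \<open>B\<close> is empty.\<close>

definition one where "one = im B (SOME a. a \<in> car B) (SOME a. a \<in> car B)"

lemma one_eq: "a \<in> car B \<Longrightarrow> im B a a = one"
proof -
  assume a: "a \<in> car B"
  have "(SOME a. a \<in> car B) \<in> car B" using a by (rule someI)
  then show ?thesis unfolding one_def using B_imp_refl_eq[OF a] by blast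
qed

lemma one_in: "a \<in> car B \<Longrightarrow> one \<in> car B"
proof -
  assume a: "a \<in> car B"
  show ?thesis using one_eq[OF a] B_imp_closed[OF a a] by simp
qed

lemma filter_subset: "is_filter F \<Longrightarrow> F \<subseteq> car B"
  unfolding impl_filter_def by blast
lemma filter_one: "is_filter F \<Longrightarrow> a \<in> car B \<Longrightarrow> one \<in> F"
  unfolding impl_filter_def using one_eq by auto
lemma filter_mp: "is_filter F \<Longrightarrow> a \<in> F \<Longrightarrow> im B a b \<in> F \<Longrightarrow> b \<in> car B \<Longrightarrow> b \<in> F"
  unfolding impl_filter_def by blast
lemma filter_imp_refl: "is_filter F \<Longrightarrow> a \<in> car B \<Longrightarrow> im B a a \<in> F"
  unfolding impl_filter_def by blast

lemma Bstar_meet_irreducible: "P \<in> Bs \<Longrightarrow> meet_irreducible B P"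
  unfolding Bstar_def by simp
lemma Bstar_filter: assumes "P \<in> Bs" shows "is_filter P"
  using Bstar_meet_irreducible[OF assms] unfolding meet_irreducible_def by (elim conjE)
lemma Bstar_subset: "P \<in> Bs \<Longrightarrow> P \<subseteq> car B"
  using Bstar_filter filter_subset by blast
lemma Bstar_proper: assumes "P \<in> Bs" shows "\<exists>b\<in>car B. b \<notin> P"
proof -
  have "P \<noteq> car B" using Bstar_meet_irreducible[OF assms] unfolding meet_irreducible_def by (elim conjE)
  then show ?thesis using Bstar_subset[OF assms] by blast
qed
lemma Bstar_irreducible: assumes "P \<in> Bs" "is_filter G1" "is_filter G2" "P = G1 \<inter> G2" shows "G1 = P \<or> G2 = P"
proof -
  have "\<not> (\<exists>G1 G2. is_filter G1 \<and> is_filter G2 \<and> G1 \<noteq> P \<and> G2 \<noteq> P \<and> P = G1 \<inter> G2)"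
    using Bstar_meet_irreducible[OF assms(1)] unfolding meet_irreducible_def by (elim conjE)
  then show ?thesis using assms(2-4) by blast
qed

definition filter_ext where "filter_ext F a = {c \<in> car B. im B a c \<in> F}"

lemma filter_ext_filter: assumes F: "is_filter F" and a: "a \<in> car B" shows "is_filter (filter_ext F a)"
  unfolding impl_filter_def
proof (intro conjI ballI allI impI)
  show "filter_ext F a \<subseteq> car B" unfolding filter_ext_def by blast
next
  fix c assume c: "c \<in> car B"
  have "im B a (im B c c) \<in> F" using B_imp_imp_refl[OF a c] filter_imp_refl[OF F c] by simp
  then show "im B c c \<in> filter_ext F a" unfolding filter_ext_def using B_imp_closed[OF c c] by blast
next
  fix x y assume x: "x \<in> filter_ext F a" and xy: "im B x y \<in> filter_ext F a" and y: "y \<in> car B"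
  have xc: "x \<in> car B" and ax: "im B a x \<in> F" using x unfolding filter_ext_def by auto
  have axy: "im B a (im B x y) \<in> F" using xy unfolding filter_ext_def by auto
  have "im B (im B a (im B x y)) (im B (im B a x) (im B a y)) \<in> F"
    using B_imp_S[OF a xc y] filter_imp_refl[OF F a] by simp
  then have "im B (im B a x) (im B a y) \<in> F"
    using filter_mp[OF F axy] B_imp_closed a xc y by blast
  then have "im B a y \<in> F" using filter_mp[OF F ax] B_imp_closed a y by blast
  then show "y \<in> filter_ext F a" unfolding filter_ext_def using y by blast
qed

lemma filter_ext_supset: assumes F: "is_filter F" and a: "a \<in> car B" shows "F \<subseteq> filter_ext F a"
proof
  fix c assume c: "c \<in> F"
  have cc: "c \<in> car B" using c filter_subset[OF F] by blast
  have "im B c (im B a c) \<in> F" using B_imp_K[OF cc a] filter_imp_refl[OF F cc] by simp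
  then have "im B a c \<in> F" using filter_mp[OF F c] B_imp_closed a cc by blast
  then show "c \<in> filter_ext F a" unfolding filter_ext_def using cc by blast
qed

lemma filter_ext_mem: assumes F: "is_filter F" and a: "a \<in> car B" shows "a \<in> filter_ext F a"
  unfolding filter_ext_def using filter_imp_refl[OF F a] a by blast

lemma filter_Union_directed:
  assumes "T \<noteq> {}" and filters: "\<And>t. t \<in> T \<Longrightarrow> is_filter (f t)"
    and dir: "\<And>t1 t2. t1 \<in> T \<Longrightarrow> t2 \<in> T \<Longrightarrow> \<exists>t\<in>T. f t1 \<subseteq> f t \<and> f t2 \<subseteq> f t"
  shows "is_filter (\<Union>t\<in>T. f t)"
  unfolding impl_filter_def
proof (intro conjI allI impI ballI)
  show "(\<Union>t\<in>T. f t) \<subseteq> car B" using filters filter_subset by blast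
next
  fix a assume "a \<in> car B"
  then show "im B a a \<in> (\<Union>t\<in>T. f t)" using assms(1) filters filter_imp_refl by blast
next
  fix a b assume "a \<in> (\<Union>t\<in>T. f t)" "im B a b \<in> (\<Union>t\<in>T. f t)" and b: "b \<in> car B"
  then obtain t1 t2 where "t1 \<in> T" "a \<in> f t1" "t2 \<in> T" "im B a b \<in> f t2" by blast
  then obtain t where "t \<in> T" "a \<in> f t" "im B a b \<in> f t" using dir by blast
  then show "b \<in> (\<Union>t\<in>T. f t)" using filter_mp[OF filters] b by blast
qed

lemma filter_Union_chain:
  assumes C: "C \<noteq> {}" and filters: "\<forall>G\<in>C. is_filter G" and chain: "\<forall>x\<in>C. \<forall>y\<in>C. x \<subseteq> y \<or> y \<subseteq> x"
  shows "is_filter (\<Union>C)"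
proof -
  have "is_filter (\<Union>G\<in>C. G)"
  proof (rule filter_Union_directed)
    show "is_filter G" if "G \<in> C" for G using filters that by blast
    show "\<exists>G\<in>C. G1 \<subseteq> G \<and> G2 \<subseteq> G" if G12: "G1 \<in> C" "G2 \<in> C" for G1 G2
    proof (cases "G1 \<subseteq> G2")
      case True
      then show ?thesis using G12(2) by blast
    next
      case False
      then have "G2 \<subseteq> G1" using chain G12 by blast
      then show ?thesis using G12(1) by blast
    qed
  qed (rule C)
  then show ?thesis by simp
qed

lemma maximal_filter_avoiding:
  assumes Q: "is_filter Q" and fin: "\<forall>t\<in>T. finite (n t)" and nQ: "\<forall>t\<in>T. \<not> n t \<subseteq> Q"
  shows "\<exists>M. is_filter M \<and> Q \<subseteq> M \<and> (\<forall>t\<in>T. \<not> n t \<subseteq> M) \<and>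
     (\<forall>G. is_filter G \<longrightarrow> M \<subseteq> G \<longrightarrow> (\<forall>t\<in>T. \<not> n t \<subseteq> G) \<longrightarrow> G = M)"
proof -
  define A where "A = {G. is_filter G \<and> Q \<subseteq> G \<and> (\<forall>t\<in>T. \<not> n t \<subseteq> G)}"
  have "\<exists>M\<in>A. \<forall>X\<in>A. M \<subseteq> X \<longrightarrow> X = M"
  proof (rule subset_Zorn_nonempty)
    have "Q \<in> A" unfolding A_def using Q nQ by simp
    then show "A \<noteq> {}" by blast
  next
    fix C assume Cne: "C \<noteq> {}" and ch: "subset.chain A C"
    have CA: "C \<subseteq> A" and chC: "\<forall>x\<in>C. \<forall>y\<in>C. x \<subseteq> y \<or> y \<subseteq> x"
      using ch unfolding subset.chain_def by auto
    have fC: "\<forall>G\<in>C. is_filter G" using CA unfolding A_def by blast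
    have 1: "is_filter (\<Union>C)" using filter_Union_chain[OF Cne fC chC] .
    have 2: "Q \<subseteq> \<Union>C"
    proof -
      obtain G where G: "G \<in> C" using Cne by blast
      then have "Q \<subseteq> G" using CA unfolding A_def by blast
      then show ?thesis using G by blast
    qed
    have 3: "\<forall>t\<in>T. \<not> n t \<subseteq> \<Union>C"
    proof (intro ballI notI)
      fix t assume t: "t \<in> T" and sub: "n t \<subseteq> \<Union>C"
      have ft: "finite (n t)" using fin t by blast
      obtain G where G: "G \<in> C" "n t \<subseteq> G"
        using finite_subset_Union_chain[OF ft sub Cne ch] by blast
      have "\<not> n t \<subseteq> G" using CA G(1) t unfolding A_def by blast
      then show False using G(2) by blast
    qed
    show "\<Union>C \<in> A" unfolding A_def using 1 2 3 by simp
  qed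
  then obtain M where M: "M \<in> A" and mx: "\<forall>X\<in>A. M \<subseteq> X \<longrightarrow> X = M" by blast
  have "is_filter M" "Q \<subseteq> M" "\<forall>t\<in>T. \<not> n t \<subseteq> M" using M unfolding A_def by auto
  moreover have "\<forall>G. is_filter G \<longrightarrow> M \<subseteq> G \<longrightarrow> (\<forall>t\<in>T. \<not> n t \<subseteq> G) \<longrightarrow> G = M"
  proof (intro allI impI)
    fix G assume G: "is_filter G" "M \<subseteq> G" "\<forall>t\<in>T. \<not> n t \<subseteq> G"
    have "G \<in> A" unfolding A_def using G \<open>Q \<subseteq> M\<close> by auto
    then show "G = M" using mx G(2) by blast
  qed
  ultimately show ?thesis by blast
qed

lemma Bstar_if_irreducible:
  assumes M: "is_filter M" and b: "b \<in> car B" "b \<notin> M"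
    and irr: "\<And>G1 G2. is_filter G1 \<Longrightarrow> is_filter G2 \<Longrightarrow> G1 \<noteq> M \<Longrightarrow> G2 \<noteq> M \<Longrightarrow> M = G1 \<inter> G2 \<Longrightarrow> False"
  shows "M \<in> Bs"
proof -
  have "M \<noteq> car B" using b by blast
  moreover have "\<not> (\<exists>G1 G2. is_filter G1 \<and> is_filter G2 \<and> G1 \<noteq> M \<and> G2 \<noteq> M \<and> M = G1 \<inter> G2)"
    using irr by blast
  ultimately have "meet_irreducible B M" unfolding meet_irreducible_def using M by blast
  then show ?thesis unfolding Bstar_def by simp
qed

lemma Bstar_separation: assumes Q: "is_filter Q" and b: "b \<in> car B" "b \<notin> Q"
  shows "\<exists>P\<in>Bs. Q \<subseteq> P \<and> b \<notin> P"
proof -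
  have "\<exists>M. is_filter M \<and> Q \<subseteq> M \<and> (\<forall>t\<in>{()}. \<not> {b} \<subseteq> M) \<and>
     (\<forall>G. is_filter G \<longrightarrow> M \<subseteq> G \<longrightarrow> (\<forall>t\<in>{()}. \<not> {b} \<subseteq> G) \<longrightarrow> G = M)"
    using maximal_filter_avoiding[OF Q, where T="{()}" and n="\<lambda>_. {b}"] b by simp
  then obtain M where M: "is_filter M" "Q \<subseteq> M" "b \<notin> M"
    and mx: "\<forall>G. is_filter G \<longrightarrow> M \<subseteq> G \<longrightarrow> b \<notin> G \<longrightarrow> G = M"
    by auto
  have "M \<in> Bs"
  proof (rule Bstar_if_irreducible[OF M(1) b(1) M(3)])
    fix G1 G2 assume G: "is_filter G1" "is_filter G2" "G1 \<noteq> M" "G2 \<noteq> M" "M = G1 \<inter> G2"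
    have "b \<in> G1" using mx G by blast
    moreover have "b \<in> G2" using mx G by blast
    ultimately show False using G M by blast
  qed
  then show ?thesis using M by blast
qed

lemma Bstar_imp_iff: assumes P: "P \<in> Bs" and a: "a \<in> car B" and b: "b \<in> car B"
  shows "im B a b \<in> P \<longleftrightarrow> (\<forall>Q\<in>Bs. P \<subseteq> Q \<longrightarrow> a \<in> Q \<longrightarrow> b \<in> Q)"
proof
  assume ab: "im B a b \<in> P"
  show "\<forall>Q\<in>Bs. P \<subseteq> Q \<longrightarrow> a \<in> Q \<longrightarrow> b \<in> Q"
  proof (intro ballI impI)
    fix Q assume Q: "Q \<in> Bs" "P \<subseteq> Q" "a \<in> Q"
    have "im B a b \<in> Q" using ab Q(2) by blast
    then show "b \<in> Q" using filter_mp[OF Bstar_filter[OF Q(1)] Q(3) _ b] by blast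
  qed
next
  assume R: "\<forall>Q\<in>Bs. P \<subseteq> Q \<longrightarrow> a \<in> Q \<longrightarrow> b \<in> Q"
  show "im B a b \<in> P"
  proof (rule ccontr)
    assume "im B a b \<notin> P"
    then have "b \<notin> filter_ext P a" unfolding filter_ext_def by blast
    then obtain Q where Q: "Q \<in> Bs" "filter_ext P a \<subseteq> Q" "b \<notin> Q"
      using Bstar_separation[OF filter_ext_filter[OF Bstar_filter[OF P] a] b] by blast
    have "P \<subseteq> Q" using filter_ext_supset[OF Bstar_filter[OF P] a] Q(2) by blast
    moreover have "a \<in> Q" using filter_ext_mem[OF Bstar_filter[OF P] a] Q(2) by blast
    ultimately have "b \<in> Q" using R Q(1) by blast
    then show False using Q(3) by blast
  qed
qed

definition impsB where "impsB cs z = foldr (im B) cs z"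

lemma impsB_simps[simp]: "impsB [] z = z" "impsB (c # cs) z = im B c (impsB cs z)"
  by (simp_all add: impsB_def)

lemma impsB_closed: "set cs \<subseteq> car B \<Longrightarrow> z \<in> car B \<Longrightarrow> impsB cs z \<in> car B"
  by (induction cs) (auto simp: B_imp_closed)

lemma Bstar_imps_iff: assumes P: "P \<in> Bs" and cs: "set cs \<subseteq> car B" and z: "z \<in> car B"
  shows "impsB cs z \<in> P \<longleftrightarrow> (\<forall>Q\<in>Bs. P \<subseteq> Q \<longrightarrow> set cs \<subseteq> Q \<longrightarrow> z \<in> Q)"
  using P cs
proof (induction cs arbitrary: P)
  case Nil
  show ?case using Nil.prems(1) by auto
next
  case (Cons c cs)
  have cc: "c \<in> car B" "set cs \<subseteq> car B" using Cons.prems by auto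
  have IH: "\<And>Q. Q \<in> Bs \<Longrightarrow> impsB cs z \<in> Q \<longleftrightarrow> (\<forall>R\<in>Bs. Q \<subseteq> R \<longrightarrow> set cs \<subseteq> R \<longrightarrow> z \<in> R)"
    using Cons.IH cc(2) by blast
  have E: "impsB (c # cs) z \<in> P \<longleftrightarrow> (\<forall>Q\<in>Bs. P \<subseteq> Q \<longrightarrow> c \<in> Q \<longrightarrow> impsB cs z \<in> Q)"
    using Bstar_imp_iff[OF Cons.prems(1) cc(1) impsB_closed[OF cc(2) z]] by simp
  show ?case
  proof
    assume A: "impsB (c # cs) z \<in> P"
    show "\<forall>Q\<in>Bs. P \<subseteq> Q \<longrightarrow> set (c # cs) \<subseteq> Q \<longrightarrow> z \<in> Q"
    proof (intro ballI impI)
      fix Q assume Q: "Q \<in> Bs" "P \<subseteq> Q" "set (c # cs) \<subseteq> Q"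
      have "impsB cs z \<in> Q" using A E Q by auto
      then show "z \<in> Q" using IH[OF Q(1)] Q by auto
    qed
  next
    assume A: "\<forall>Q\<in>Bs. P \<subseteq> Q \<longrightarrow> set (c # cs) \<subseteq> Q \<longrightarrow> z \<in> Q"
    have "\<forall>Q\<in>Bs. P \<subseteq> Q \<longrightarrow> c \<in> Q \<longrightarrow> impsB cs z \<in> Q"
    proof (intro ballI impI)
      fix Q assume Q: "Q \<in> Bs" "P \<subseteq> Q" "c \<in> Q"
      have "\<forall>R\<in>Bs. Q \<subseteq> R \<longrightarrow> set cs \<subseteq> R \<longrightarrow> z \<in> R"
      proof (intro ballI impI)
        fix R assume R: "R \<in> Bs" "Q \<subseteq> R" "set cs \<subseteq> R"
        have "set (c # cs) \<subseteq> R" using R Q by auto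
        moreover have "P \<subseteq> R" using R Q by auto
        ultimately show "z \<in> R" using A R(1) by blast
      qed
      then show "impsB cs z \<in> Q" using IH[OF Q(1)] by blast
    qed
    then show "impsB (c # cs) z \<in> P" using E by blast
  qed
qed

lemma Bstar_meet_iff: assumes M: "Meet \<in> L" and P: "P \<in> Bs" and a: "a \<in> car B" and b: "b \<in> car B"
  shows "mt B a b \<in> P \<longleftrightarrow> a \<in> P \<and> b \<in> P"
proof -
  have F: "is_filter P" using Bstar_filter[OF P] .
  have ab: "mt B a b \<in> car B" using B_meet_closed[OF M a b] .
  have one: "im B a a \<in> P" using filter_imp_refl[OF F a] .
  show ?thesis
  proof
    assume m: "mt B a b \<in> P"
    have "im B (mt B a b) a \<in> P" "im B (mt B a b) b \<in> P"
      using B_meet_imp(1,2)[OF M a b] one by simp_all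
    then show "a \<in> P \<and> b \<in> P" using filter_mp[OF F m] a b by blast
  next
    assume ab2: "a \<in> P \<and> b \<in> P"
    have "im B a (im B b (mt B a b)) \<in> P" using B_meet_imp(3)[OF M a b] one by simp
    then have "im B b (mt B a b) \<in> P" using filter_mp[OF F _ _ B_imp_closed[OF b ab]] ab2 by blast
    then show "mt B a b \<in> P" using filter_mp[OF F _ _ ab] ab2 by blast
  qed
qed

lemma Bstar_common_refuter: assumes P: "P \<in> Bs" and a: "a \<in> car B" "a \<notin> P" and b: "b \<in> car B" "b \<notin> P"
  shows "\<exists>y\<in>car B. y \<notin> P \<and> im B a y \<in> P \<and> im B b y \<in> P"
proof -
  have F: "is_filter P" using Bstar_filter[OF P] .
  have "filter_ext P a \<noteq> P" using filter_ext_mem[OF F a(1)] a(2) by blast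
  moreover have "filter_ext P b \<noteq> P" using filter_ext_mem[OF F b(1)] b(2) by blast
  ultimately have "P \<noteq> filter_ext P a \<inter> filter_ext P b"
    using Bstar_irreducible[OF P filter_ext_filter[OF F a(1)] filter_ext_filter[OF F b(1)]] by blast
  moreover have "P \<subseteq> filter_ext P a \<inter> filter_ext P b" using filter_ext_supset[OF F a(1)]
      filter_ext_supset[OF F b(1)] by blast
  ultimately obtain y where "y \<in> filter_ext P a" "y \<in> filter_ext P b" "y \<notin> P" by blast
  then show ?thesis unfolding filter_ext_def by blast
qed

lemma Bstar_join_iff: assumes J: "Join \<in> L" and P: "P \<in> Bs" and a: "a \<in> car B" and b: "b \<in> car B"
  shows "jn B a b \<in> P \<longleftrightarrow> a \<in> P \<or> b \<in> P"
proof -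
  have F: "is_filter P" using Bstar_filter[OF P] .
  have ab: "jn B a b \<in> car B" using B_join_closed[OF J a b] .
  have one: "im B a a \<in> P" using filter_imp_refl[OF F a] .
  show ?thesis
  proof
    assume j: "jn B a b \<in> P"
    show "a \<in> P \<or> b \<in> P"
    proof (rule ccontr)
      assume "\<not> (a \<in> P \<or> b \<in> P)"
      then obtain y where y: "y \<in> car B" "y \<notin> P" "im B a y \<in> P" "im B b y \<in> P"
        using Bstar_common_refuter[OF P a _ b] by blast
      have "im B (im B a y) (im B (im B b y) (im B (jn B a b) y)) \<in> P"
        using B_join_imp(3)[OF J a b y(1)] one by simp
      then have "im B (im B b y) (im B (jn B a b) y) \<in> P"
        using filter_mp[OF F y(3) _ B_imp_closed[OF B_imp_closed[OF b y(1)] B_imp_closed[OF ab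
          y(1)]]] by blast
      then have "im B (jn B a b) y \<in> P"
        using filter_mp[OF F y(4) _ B_imp_closed[OF ab y(1)]] by blast
      then have "y \<in> P" using filter_mp[OF F j _ y(1)] by blast
      then show False using y(2) by blast
    qed
  next
    assume ab2: "a \<in> P \<or> b \<in> P"
    have "im B a (jn B a b) \<in> P" "im B b (jn B a b) \<in> P"
      using B_join_imp(1,2)[OF J a b a] one by simp_all
    then show "jn B a b \<in> P" using filter_mp[OF F _ _ ab] ab2 by blast
  qed
qed

lemma Bstar_neg_iff: assumes N: "Neg \<in> L" and P: "P \<in> Bs" and a: "a \<in> car B"
  shows "ng B a \<in> P \<longleftrightarrow> (\<forall>Q\<in>Bs. P \<subseteq> Q \<longrightarrow> a \<notin> Q)"
proof -
  have F: "is_filter P" using Bstar_filter[OF P] .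
  have na: "ng B a \<in> car B" using B_neg_closed[OF N a] .
  show ?thesis
  proof
    assume n: "ng B a \<in> P"
    show "\<forall>Q\<in>Bs. P \<subseteq> Q \<longrightarrow> a \<notin> Q"
    proof (intro ballI impI notI)
      fix Q assume Q: "Q \<in> Bs" "P \<subseteq> Q" "a \<in> Q"
      have FQ: "is_filter Q" using Bstar_filter[OF Q(1)] .
      obtain b where b: "b \<in> car B" "b \<notin> Q" using Bstar_proper[OF Q(1)] by blast
      have "im B a (im B (ng B a) b) \<in> Q"
        using B_neg_imp(1)[OF N a b(1)] filter_imp_refl[OF FQ a] by simp
      then have "im B (ng B a) b \<in> Q" using filter_mp[OF FQ Q(3) _ B_imp_closed[OF na b(1)]] by blast
      moreover have "ng B a \<in> Q" using n Q(2) by blast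
      ultimately have "b \<in> Q" using filter_mp[OF FQ _ _ b(1)] by blast
      then show False using b(2) by blast
    qed
  next
    assume R: "\<forall>Q\<in>Bs. P \<subseteq> Q \<longrightarrow> a \<notin> Q"
    show "ng B a \<in> P"
    proof (rule ccontr)
      assume nn: "ng B a \<notin> P"
      have "im B (im B a (ng B a)) (ng B a) \<in> P"
        using B_neg_imp(2)[OF N a a] filter_imp_refl[OF F a] by simp
      then have "im B a (ng B a) \<notin> P" using filter_mp[OF F _ _ na] nn by blast
      then obtain Q where "Q \<in> Bs" "P \<subseteq> Q" "a \<in> Q"
        using Bstar_imp_iff[OF P a na] by blast
      then show False using R by blast
    qed
  qed
qed

lemma Bstar_zero: assumes Z: "Zero \<in> L" and P: "P \<in> Bs" shows "zr B \<notin> P"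
proof
  assume z: "zr B \<in> P"
  have F: "is_filter P" using Bstar_filter[OF P] .
  obtain b where b: "b \<in> car B" "b \<notin> P" using Bstar_proper[OF P] by blast
  have "im B (zr B) b \<in> P" using B_zero_imp[OF Z b(1)] filter_imp_refl[OF F b(1)] by simp
  then have "b \<in> P" using filter_mp[OF F z _ b(1)] by blast
  then show False using b(2) by blast
qed

lemma Bstar_top: assumes O: "One \<in> L" and P: "P \<in> Bs" shows "tp B \<in> P"
proof -
  obtain b where b: "b \<in> car B" "b \<notin> P" using Bstar_proper[OF P] by blast
  show ?thesis using B_top_eq[OF O b(1)] filter_imp_refl[OF Bstar_filter[OF P] b(1)] by simp
qed

subsection \<open>The embedding of \<open>B\<close> into \<open>Up(B\<^sub>*)\<close>\<close>

definition emb where "emb c = {P \<in> Bs. c \<in> P}"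
definition embs where "embs C = {P \<in> Bs. C \<subseteq> P}"

lemma upset_emb: "is_upset Bs (\<subseteq>) (emb c)"
  unfolding is_upset_def emb_def by blast
lemma upset_embs: "is_upset Bs (\<subseteq>) (embs C)"
  unfolding is_upset_def embs_def by blast
lemma upset_val_emb: "upset_val Bs (\<lambda>x. emb (w x))"
  unfolding upset_val_def using upset_emb by simp

lemma emb_meet: "Meet \<in> L \<Longrightarrow> a \<in> car B \<Longrightarrow> b \<in> car B \<Longrightarrow> emb (mt B a b) = emb a \<inter> emb b"
  unfolding emb_def using Bstar_meet_iff by blast

lemma emb_join: "Join \<in> L \<Longrightarrow> a \<in> car B \<Longrightarrow> b \<in> car B \<Longrightarrow> emb (jn B a b) = emb a \<union> emb b"
  unfolding emb_def using Bstar_join_iff by blast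

lemma emb_imp:
  assumes "a \<in> car B" "b \<in> car B"
  shows "emb (im B a b) = im (Up Bs (\<subseteq>)) (emb a) (emb b)"
  unfolding emb_def using Bstar_imp_iff[OF _ assms] by (auto simp: downset_def)

lemma emb_neg:
  assumes "Neg \<in> L" "a \<in> car B"
  shows "emb (ng B a) = ng (Up Bs (\<subseteq>)) (emb a)"
  unfolding emb_def using Bstar_neg_iff[OF assms(1) _ assms(2)] by (auto simp: downset_def)

lemma emb_top: "One \<in> L \<Longrightarrow> emb (tp B) = Bs"
  unfolding emb_def using Bstar_top by blast

lemma emb_zero: "Zero \<in> L \<Longrightarrow> emb (zr B) = {}"
  unfolding emb_def using Bstar_zero by blast

lemma emb_eval:
  fixes \<chi> :: "'v fm"
  assumes "syms \<chi> \<subseteq> L" and w: "\<forall>x. w x \<in> car B"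
  shows "emb (eval B w \<chi>) = sem (\<lambda>x. emb (w x)) \<chi>"
  using assms(1)
proof (induction \<chi>)
  case (And a b)
  then show ?case using emb_meet eval_closed[OF B_closed _ w] by simp
next
  case (Or a b)
  then show ?case using emb_join eval_closed[OF B_closed _ w] by simp
next
  case (Impl a b)
  then show ?case using emb_imp eval_closed[OF B_closed _ w] by simp
next
  case (Not a)
  then show ?case using emb_neg eval_closed[OF B_closed _ w] by simp
qed (simp_all add: emb_top emb_zero)

lemma Bstar_finite_refuter:
  assumes P: "P \<in> Bs" and fin: "finite C" and C: "C \<subseteq> car B" "C \<inter> P = {}"
  shows "\<exists>y\<in>car B. y \<notin> P \<and> (\<forall>c\<in>C. im B c y \<in> P)"
  using fin C
proof (induction C rule: finite_induct)
  case empty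
  then show ?case using Bstar_proper[OF P] by blast
next
  case (insert c C)
  then obtain y' where y': "y' \<in> car B" "y' \<notin> P" "\<forall>c\<in>C. im B c y' \<in> P" by blast
  have c: "c \<in> car B" "c \<notin> P" using insert.prems by auto
  obtain y where y: "y \<in> car B" "y \<notin> P" "im B c y \<in> P" "im B y' y \<in> P"
    using Bstar_common_refuter[OF P c y'(1,2)] by blast
  have "\<forall>c'\<in>C. im B c' y \<in> P"
  proof
    fix c' assume c': "c' \<in> C"
    have cc: "c' \<in> car B" using c' insert.prems by blast
    have 1: "\<forall>Q\<in>Bs. P \<subseteq> Q \<longrightarrow> c' \<in> Q \<longrightarrow> y' \<in> Q" using Bstar_imp_iff[OF P cc y'(1)] y'(3) c' by blast
    have 2: "\<forall>Q\<in>Bs. P \<subseteq> Q \<longrightarrow> y' \<in> Q \<longrightarrow> y \<in> Q" using Bstar_imp_iff[OF P y'(1) y(1)] y(4) by blast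
    show "im B c' y \<in> P" using Bstar_imp_iff[OF P cc y(1)] 1 2 by blast
  qed
  then show ?case using y by blast
qed

lemma Bstar_Inter_le:
  assumes W: "finite W" "W \<subseteq> Bs" and Q: "Q \<in> Bs" and sub: "car B \<inter> \<Inter>W \<subseteq> Q"
  shows "\<exists>P\<in>W. P \<subseteq> Q"
proof (rule ccontr)
  assume "\<not> (\<exists>P\<in>W. P \<subseteq> Q)"
  then have "\<forall>P\<in>W. \<exists>a. a \<in> P \<and> a \<notin> Q" by blast
  then obtain f where f: "\<forall>P\<in>W. f P \<in> P \<and> f P \<notin> Q" by metis
  define C where "C = f ` W"
  have finC: "finite C" unfolding C_def using W(1) by simp
  have Cc: "C \<subseteq> car B" unfolding C_def using f W(2) Bstar_subset by blast
  have CQ: "C \<inter> Q = {}" unfolding C_def using f by blast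
  obtain y where y: "y \<in> car B" "y \<notin> Q" "\<forall>c\<in>C. im B c y \<in> Q"
    using Bstar_finite_refuter[OF Q finC Cc CQ] by blast
  obtain cl where cl: "set cl = C" using finite_list[OF finC] by blast
  define cs where "cs = map (\<lambda>c. im B c y) cl"
  have csc: "set cs \<subseteq> car B" unfolding cs_def using cl Cc B_imp_closed y(1) by auto
  define d where "d = impsB cs y"
  have dc: "d \<in> car B" unfolding d_def using impsB_closed[OF csc y(1)] .
  have "\<forall>P\<in>W. d \<in> P"
  proof
    fix P assume P: "P \<in> W"
    have PX: "P \<in> Bs" using P W(2) by blast
    have "\<forall>R\<in>Bs. P \<subseteq> R \<longrightarrow> set cs \<subseteq> R \<longrightarrow> y \<in> R"
    proof (intro ballI impI)
      fix R assume R: "R \<in> Bs" "P \<subseteq> R" "set cs \<subseteq> R"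
      have "f P \<in> R" using f P R(2) by blast
      moreover have "im B (f P) y \<in> R" using R(3) P cl unfolding cs_def C_def by auto
      ultimately show "y \<in> R" using filter_mp[OF Bstar_filter[OF R(1)] _ _ y(1)] by blast
    qed
    then show "d \<in> P" unfolding d_def using Bstar_imps_iff[OF PX csc y(1)] by blast
  qed
  then have "d \<in> Q" using sub dc by blast
  moreover have "set cs \<subseteq> Q" unfolding cs_def using cl y(3) by auto
  ultimately have "y \<in> Q" using Bstar_imps_iff[OF Q csc y(1)] Q unfolding d_def by blast
  then show False using y(2) by blast
qed

text \<open>The upsets generated by finitely many elements: the compact open upsets of the Esakia space of \<open>B\<close>.\<close>

definition fg_upset :: "'b set set \<Rightarrow> bool" where
  "fg_upset U \<longleftrightarrow> (\<exists>C. finite C \<and> C \<subseteq> car B \<and> U = embs C)"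

lemma fg_upset_embs: "finite C \<Longrightarrow> C \<subseteq> car B \<Longrightarrow> fg_upset (embs C)"
  unfolding fg_upset_def by blast

lemma fg_upset_Bs: "fg_upset Bs"
  using fg_upset_embs[of "{}"] by (simp add: embs_def)

lemma fg_upset_Int:
  assumes "fg_upset U" "fg_upset V"
  shows "fg_upset (U \<inter> V)"
proof -
  obtain C1 C2 where C: "finite C1" "C1 \<subseteq> car B" "U = embs C1" "finite C2" "C2 \<subseteq> car B" "V = embs C2"
    using assms unfolding fg_upset_def by blast
  moreover have "embs C1 \<inter> embs C2 = embs (C1 \<union> C2)" unfolding embs_def by blast
  ultimately show ?thesis using fg_upset_embs[of "C1 \<union> C2"] by simp
qed

lemma fg_upset_Un:
  assumes J: "Join \<in> L" and "fg_upset U" "fg_upset V"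
  shows "fg_upset (U \<union> V)"
proof -
  obtain C1 C2 where C: "finite C1" "C1 \<subseteq> car B" "U = embs C1" "finite C2" "C2 \<subseteq> car B" "V = embs C2"
    using assms(2,3) unfolding fg_upset_def by blast
  define D where "D = {jn B x y | x y. x \<in> C1 \<and> y \<in> C2}"
  have D: "finite D" "D \<subseteq> car B"
    unfolding D_def using C B_join_closed[OF J] by (auto simp: finite_image_set2)
  have "embs C1 \<union> embs C2 = embs D"
  proof (rule set_eqI)
    fix P
    show "P \<in> embs C1 \<union> embs C2 \<longleftrightarrow> P \<in> embs D"
    proof (cases "P \<in> Bs")
      case True
      have jn_iff: "jn B x y \<in> P \<longleftrightarrow> x \<in> P \<or> y \<in> P" if "x \<in> C1" "y \<in> C2" for x y
        using Bstar_join_iff[OF J True] C(2,5) that by blast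
      have "D \<subseteq> P \<longleftrightarrow> (\<forall>x\<in>C1. \<forall>y\<in>C2. jn B x y \<in> P)"
        unfolding D_def by blast
      also have "\<dots> \<longleftrightarrow> (\<forall>x\<in>C1. \<forall>y\<in>C2. x \<in> P \<or> y \<in> P)"
        by (simp add: jn_iff)
      also have "\<dots> \<longleftrightarrow> C1 \<subseteq> P \<or> C2 \<subseteq> P" by blast
      finally show ?thesis using True unfolding embs_def by blast
    qed (simp add: embs_def)
  qed
  then show ?thesis using C D fg_upset_embs by simp
qed

lemma fg_upset_imp:
  assumes "fg_upset U" "fg_upset V"
  shows "fg_upset (Bs - downset Bs (\<subseteq>) (U - V))"
proof -
  obtain C1 C2 where C: "finite C1" "C1 \<subseteq> car B" "U = embs C1" "finite C2" "C2 \<subseteq> car B" "V = embs C2"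
    using assms unfolding fg_upset_def by blast
  obtain cl where cl: "set cl = C1" using finite_list[OF C(1)] by blast
  define D where "D = impsB cl ` C2"
  have D: "finite D" "D \<subseteq> car B"
    unfolding D_def using C cl impsB_closed by auto
  have "Bs - downset Bs (\<subseteq>) (U - V) = embs D"
  proof (rule set_eqI)
    fix P
    show "P \<in> Bs - downset Bs (\<subseteq>) (U - V) \<longleftrightarrow> P \<in> embs D"
    proof (cases "P \<in> Bs")
      case True
      have "P \<in> Bs - downset Bs (\<subseteq>) (U - V) \<longleftrightarrow> (\<forall>c\<in>C2. \<forall>Q\<in>Bs. P \<subseteq> Q \<longrightarrow> C1 \<subseteq> Q \<longrightarrow> c \<in> Q)"
        using True C unfolding downset_def embs_def by blast
      also have "\<dots> \<longleftrightarrow> (\<forall>c\<in>C2. impsB cl c \<in> P)"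
      proof -
        have "impsB cl c \<in> P \<longleftrightarrow> (\<forall>Q\<in>Bs. P \<subseteq> Q \<longrightarrow> C1 \<subseteq> Q \<longrightarrow> c \<in> Q)" if "c \<in> C2" for c
          using Bstar_imps_iff[OF True, of cl c] C(2,5) cl that by auto
        then show ?thesis by simp
      qed
      also have "\<dots> \<longleftrightarrow> P \<in> embs D"
        using True unfolding embs_def D_def by blast
      finally show ?thesis .
    qed (simp add: downset_def embs_def)
  qed
  then show ?thesis using D fg_upset_embs by simp
qed

lemma fg_upset_empty:
  assumes "Zero \<in> L \<or> Neg \<in> L"
  shows "fg_upset {}"
proof (cases "car B = {}")
  case True
  then have "Bs = {}" using Bstar_proper by blast
  then show ?thesis using fg_upset_Bs by simp
next
  case False
  then obtain b where b: "b \<in> car B" by blast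
  define z where "z = (if Zero \<in> L then zr B else ng B one)"
  have z: "z \<in> car B"
    unfolding z_def using assms B_zero_closed B_neg_closed one_in[OF b] by auto
  have "z \<notin> P" if P: "P \<in> Bs" for P
  proof (cases "Zero \<in> L")
    case True
    then show ?thesis using Bstar_zero P unfolding z_def by simp
  next
    case False
    have "one \<in> P" using filter_one[OF Bstar_filter[OF P] b] .
    then have "ng B one \<notin> P"
      using Bstar_neg_iff[OF _ P one_in[OF b]] assms False P by blast
    then show ?thesis using False unfolding z_def by simp
  qed
  then have "embs {z} = {}" unfolding embs_def by blast
  then show ?thesis using fg_upset_embs[of "{z}"] z by simp
qed

lemma fg_upset_neg:
  assumes "Neg \<in> L" "fg_upset U"
  shows "fg_upset (Bs - downset Bs (\<subseteq>) U)"
  using fg_upset_imp[OF assms(2) fg_upset_empty] assms(1) by simp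

lemma fg_upset_eval:
  fixes \<phi> :: "'v fm"
  assumes "syms \<phi> \<subseteq> L" and "\<forall>m. fg_upset (w m)"
  shows "fg_upset (sem w \<phi>)"
  using assms(1)
proof (induction \<phi>)
  case (Var x)
  then show ?case using assms(2) by simp
qed (simp_all add: fg_upset_Bs fg_upset_Int fg_upset_Un fg_upset_imp fg_upset_neg fg_upset_empty)

subsection \<open>Compactness\<close>

definition filter_gen where "filter_gen A = {c \<in> car B. \<forall>G. is_filter G \<longrightarrow> A \<subseteq> G \<longrightarrow> c \<in> G}"

lemma filter_gen_filter: assumes "A \<subseteq> car B" shows "is_filter (filter_gen A)"
  unfolding impl_filter_def
proof (intro conjI)
  show "filter_gen A \<subseteq> car B" unfolding filter_gen_def by blast
  show "\<forall>a\<in>car B. im B a a \<in> filter_gen A" unfolding filter_gen_def using B_imp_closed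
      filter_imp_refl by blast
  show "\<forall>a b. a \<in> filter_gen A \<longrightarrow> im B a b \<in> filter_gen A \<longrightarrow> b \<in> car B \<longrightarrow> b \<in> filter_gen A"
  proof (intro allI impI)
    fix a b assume a: "a \<in> filter_gen A" and ab: "im B a b \<in> filter_gen A" and b: "b \<in> car B"
    have "\<forall>G. is_filter G \<longrightarrow> A \<subseteq> G \<longrightarrow> b \<in> G"
    proof (intro allI impI)
      fix G assume G: "is_filter G" "A \<subseteq> G"
      have "a \<in> G" "im B a b \<in> G" using a ab G unfolding filter_gen_def by auto
      then show "b \<in> G" using filter_mp[OF G(1) _ _ b] by blast
    qed
    then show "b \<in> filter_gen A" unfolding filter_gen_def using b by blast
  qed
qed

lemma filter_gen_supset: "A \<subseteq> car B \<Longrightarrow> A \<subseteq> filter_gen A"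
  unfolding filter_gen_def by blast

lemma filter_gen_least: "is_filter G \<Longrightarrow> A \<subseteq> G \<Longrightarrow> filter_gen A \<subseteq> G"
  unfolding filter_gen_def by blast

lemma filter_embs_mono:
  assumes G: "is_filter G" and "C \<subseteq> G" "C' \<subseteq> car B" "embs C \<subseteq> embs C'"
  shows "C' \<subseteq> G"
proof
  fix x assume x: "x \<in> C'"
  show "x \<in> G"
  proof (rule ccontr)
    assume "x \<notin> G"
    then obtain R where "R \<in> Bs" "G \<subseteq> R" "x \<notin> R"
      using Bstar_separation[OF G] x assms(3) by blast
    then show False using assms(2,4) x unfolding embs_def by blast
  qed
qed

lemma Bstar_avoiding_directed:
  assumes F: "is_filter F" and T: "T \<noteq> {}"
    and fin: "\<And>t. t \<in> T \<Longrightarrow> finite (N t) \<and> N t \<subseteq> car B"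
    and dir: "\<And>t1 t2. t1 \<in> T \<Longrightarrow> t2 \<in> T \<Longrightarrow> \<exists>t\<in>T. embs (N t1) \<union> embs (N t2) \<subseteq> embs (N t)"
    and avoid: "\<And>t. t \<in> T \<Longrightarrow> \<not> N t \<subseteq> F"
  shows "\<exists>M\<in>Bs. F \<subseteq> M \<and> (\<forall>t\<in>T. \<not> N t \<subseteq> M)"
proof -
  have fin': "\<forall>t\<in>T. finite (N t)" and avoid': "\<forall>t\<in>T. \<not> N t \<subseteq> F"
    using fin avoid by auto
  obtain M where M: "is_filter M" "F \<subseteq> M" "\<forall>t\<in>T. \<not> N t \<subseteq> M"
    and max: "\<forall>G. is_filter G \<longrightarrow> M \<subseteq> G \<longrightarrow> (\<forall>t\<in>T. \<not> N t \<subseteq> G) \<longrightarrow> G = M"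
    using maximal_filter_avoiding[OF F fin' avoid'] by blast
  obtain t0 b where b: "t0 \<in> T" "b \<in> N t0" "b \<notin> M" using T M(3) by blast
  have "M \<in> Bs"
  proof (rule Bstar_if_irreducible[OF M(1) _ b(3)])
    show "b \<in> car B" using fin b(1,2) by blast
  next
    fix G1 G2 assume G: "is_filter G1" "is_filter G2" "G1 \<noteq> M" "G2 \<noteq> M" "M = G1 \<inter> G2"
    obtain t1 t2 where t12: "t1 \<in> T" "N t1 \<subseteq> G1" "t2 \<in> T" "N t2 \<subseteq> G2"
      using max G by blast
    obtain t where t: "t \<in> T" "embs (N t1) \<subseteq> embs (N t)" "embs (N t2) \<subseteq> embs (N t)"
      using dir[OF t12(1,3)] by blast
    have "N t \<subseteq> car B" using fin t(1) by blast
    then have "N t \<subseteq> G1 \<inter> G2"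
      using filter_embs_mono[OF G(1) t12(2) _ t(2)] filter_embs_mono[OF G(2) t12(4) _ t(3)] by blast
    then show False using G(5) M(3) t(1) by blast
  qed
  then show ?thesis using M by blast
qed

lemma finite_subset_Union_directed:
  assumes "finite N" "N \<subseteq> (\<Union>t\<in>T. f t)" "T \<noteq> {}"
    and dir: "\<And>t1 t2. t1 \<in> T \<Longrightarrow> t2 \<in> T \<Longrightarrow> \<exists>t\<in>T. f t1 \<subseteq> f t \<and> f t2 \<subseteq> f t"
  shows "\<exists>t\<in>T. N \<subseteq> f t"
  using assms(1,2)
proof (induction N rule: finite_induct)
  case (insert x N)
  then obtain t1 t2 where "t1 \<in> T" "N \<subseteq> f t1" "t2 \<in> T" "x \<in> f t2" by blast
  then show ?case using dir[of t1 t2] by blast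
qed (use assms(3) in blast)

lemma filter_gen_mono_embs:
  assumes "Q \<subseteq> car B" "A \<subseteq> car B" "A' \<subseteq> car B" "embs A \<subseteq> embs A'"
  shows "filter_gen (Q \<union> A') \<subseteq> filter_gen (Q \<union> A)"
proof -
  have QA: "Q \<union> A \<subseteq> car B" using assms(1,2) by blast
  have "A' \<subseteq> filter_gen (Q \<union> A)"
    using filter_embs_mono[OF filter_gen_filter[OF QA] _ assms(3,4)] filter_gen_supset[OF QA] by blast
  then have "Q \<union> A' \<subseteq> filter_gen (Q \<union> A)" using filter_gen_supset[OF QA] by blast
  then show ?thesis by (rule filter_gen_least[OF filter_gen_filter[OF QA]])
qed

lemma Bstar_directed_compactness:
  assumes T: "T \<noteq> {}" and Q: "Q \<in> Bs"
    and fg: "\<forall>t\<in>T. fg_upset (U t) \<and> fg_upset (V t)"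
    and dir: "\<And>t1 t2. t1 \<in> T \<Longrightarrow> t2 \<in> T \<Longrightarrow> \<exists>t\<in>T. U t \<subseteq> U t1 \<inter> U t2 \<and> V t1 \<union> V t2 \<subseteq> V t"
    and wit: "\<And>t. t \<in> T \<Longrightarrow> \<exists>R\<in>Bs. Q \<subseteq> R \<and> R \<in> U t \<and> R \<notin> V t"
  shows "\<exists>R\<in>Bs. Q \<subseteq> R \<and> (\<forall>t\<in>T. R \<in> U t \<and> R \<notin> V t)"
proof -
  obtain A where "\<forall>t\<in>T. finite (A t) \<and> A t \<subseteq> car B \<and> U t = embs (A t)"
    using bchoice[of T "\<lambda>t C. finite C \<and> C \<subseteq> car B \<and> U t = embs C"] fg
    unfolding fg_upset_def by blast
  then have A: "finite (A t)" "A t \<subseteq> car B" "U t = embs (A t)" if "t \<in> T" for t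
    using that by auto
  obtain N where "\<forall>t\<in>T. finite (N t) \<and> N t \<subseteq> car B \<and> V t = embs (N t)"
    using bchoice[of T "\<lambda>t C. finite C \<and> C \<subseteq> car B \<and> V t = embs C"] fg
    unfolding fg_upset_def by blast
  then have N: "finite (N t)" "N t \<subseteq> car B" "V t = embs (N t)" if "t \<in> T" for t
    using that by auto
  define G where "G t = filter_gen (Q \<union> A t)" for t
  have G: "is_filter (G t)" "Q \<union> A t \<subseteq> G t" if "t \<in> T" for t
    unfolding G_def using filter_gen_filter[of "Q \<union> A t"] filter_gen_supset[of "Q \<union> A t"]
      Bstar_subset[OF Q] A(2)[OF that] by auto
  have G_mono: "G t1 \<subseteq> G t" if t1: "t1 \<in> T" and t: "t \<in> T" and le: "U t \<subseteq> U t1" for t1 t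
    unfolding G_def using filter_gen_mono_embs[OF Bstar_subset[OF Q] A(2)[OF t] A(2)[OF t1]]
      le A(3) t1 t by simp
  have G_dir: "\<exists>t\<in>T. G t1 \<subseteq> G t \<and> G t2 \<subseteq> G t" if t12: "t1 \<in> T" "t2 \<in> T" for t1 t2
  proof -
    obtain t where "t \<in> T" "U t \<subseteq> U t1" "U t \<subseteq> U t2" using dir[OF t12] by blast
    then show ?thesis using G_mono t12 by blast
  qed
  have G_avoid: "\<not> N t \<subseteq> (\<Union>t\<in>T. G t)" if t: "t \<in> T" for t
  proof
    assume "N t \<subseteq> (\<Union>t\<in>T. G t)"
    then obtain t' where t': "t' \<in> T" "N t \<subseteq> G t'"
      using finite_subset_Union_directed[OF N(1)[OF t] _ T G_dir] by blast
    obtain t'' where t'': "t'' \<in> T" "U t'' \<subseteq> U t'" "V t \<subseteq> V t''"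
      using dir[OF t'(1) t] by blast
    obtain R where R: "R \<in> Bs" "Q \<subseteq> R" "R \<in> U t''" "R \<notin> V t''"
      using wit[OF t''(1)] by blast
    have "A t'' \<subseteq> R" using R(3) A(3)[OF t''(1)] unfolding embs_def by blast
    then have "Q \<union> A t'' \<subseteq> R" using R(2) by blast
    then have "G t'' \<subseteq> R" unfolding G_def by (rule filter_gen_least[OF Bstar_filter[OF R(1)]])
    then have "N t \<subseteq> R" using t'(2) G_mono[OF t'(1) t''(1,2)] by blast
    then have "R \<in> V t" using R(1) N(3)[OF t] unfolding embs_def by blast
    then show False using t''(3) R(4) by blast
  qed
  have "\<exists>M\<in>Bs. (\<Union>t\<in>T. G t) \<subseteq> M \<and> (\<forall>t\<in>T. \<not> N t \<subseteq> M)"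
  proof (rule Bstar_avoiding_directed)
    show "is_filter (\<Union>t\<in>T. G t)" using filter_Union_directed[OF T G(1) G_dir] by blast
    show "\<exists>t\<in>T. embs (N t1) \<union> embs (N t2) \<subseteq> embs (N t)" if t12: "t1 \<in> T" "t2 \<in> T" for t1 t2
    proof -
      obtain t where "t \<in> T" "V t1 \<union> V t2 \<subseteq> V t" using dir[OF t12] by blast
      then show ?thesis using N(3) t12 by auto
    qed
  qed (use T N G_avoid in auto)
  then obtain M where M: "M \<in> Bs" "(\<Union>t\<in>T. G t) \<subseteq> M" "\<forall>t\<in>T. \<not> N t \<subseteq> M" by blast
  have QA: "Q \<union> A t \<subseteq> M" if "t \<in> T" for t
    using G(2)[OF that] M(2) that by blast
  have "M \<in> U t \<and> M \<notin> V t" if "t \<in> T" for t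
    using QA[OF that] M(1,3) A(3)[OF that] N(3)[OF that] that unfolding embs_def by blast
  then show ?thesis using M(1) QA T by blast
qed

end

section \<open>Esakia's lemma\<close>

text \<open>For a valuation \<open>valD\<close> by sets \<open>embs (D m)\<close>, the valuations \<open>valE E\<close> with \<open>E\<close> ranging over
  the finitely supported families of finite subsets of \<open>D\<close> form a directed system approximating
  \<open>valD\<close> from above; \<open>eventually_fin\<close> means eventually along this system.\<close>

locale approximation = variety_algebra L H S B
  for L :: "opsym set" and H :: "'a alg" and S :: "'a set" and B :: "'b alg" +
  fixes D :: "nat \<Rightarrow> 'b set"
  assumes D_subset: "D m \<subseteq> car B"
begin

definition valD :: "nat \<Rightarrow> 'b set set" where
  "valD m = embs (D m)"

definition fin_approx :: "(nat \<Rightarrow> 'b set) set" where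
  "fin_approx = {E. (\<forall>m. finite (E m) \<and> E m \<subseteq> D m) \<and> finite {m. E m \<noteq> {}}}"

definition valE :: "(nat \<Rightarrow> 'b set) \<Rightarrow> nat \<Rightarrow> 'b set set" where
  "valE E m = embs (E m)"

definition eventually_fin :: "((nat \<Rightarrow> 'b set) \<Rightarrow> bool) \<Rightarrow> bool" where
  "eventually_fin Pr \<longleftrightarrow> (\<exists>E\<in>fin_approx. \<forall>E'\<in>fin_approx. E \<le> E' \<longrightarrow> Pr E')"

lemma fin_approx_bot: "bot \<in> fin_approx"
  unfolding fin_approx_def by simp

lemma fin_approx_sup:
  assumes "E1 \<in> fin_approx" "E2 \<in> fin_approx"
  shows "sup E1 E2 \<in> fin_approx"
proof -
  have "{m. sup E1 E2 m \<noteq> {}} = {m. E1 m \<noteq> {}} \<union> {m. E2 m \<noteq> {}}" by auto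
  then show ?thesis using assms unfolding fin_approx_def by auto
qed

lemma eventually_fin_True: "(\<And>E. Pr E) \<Longrightarrow> eventually_fin Pr"
  unfolding eventually_fin_def using fin_approx_bot by blast

lemma eventually_fin_conj:
  assumes "eventually_fin P1" "eventually_fin P2"
  shows "eventually_fin (\<lambda>E. P1 E \<and> P2 E)"
proof -
  obtain E1 E2 where "E1 \<in> fin_approx" "\<forall>E'\<in>fin_approx. E1 \<le> E' \<longrightarrow> P1 E'"
    "E2 \<in> fin_approx" "\<forall>E'\<in>fin_approx. E2 \<le> E' \<longrightarrow> P2 E'"
    using assms unfolding eventually_fin_def by blast
  then show ?thesis
    unfolding eventually_fin_def by (intro bexI[of _ "sup E1 E2"]) (auto intro: fin_approx_sup)
qed

lemma eventually_fin_mono: "eventually_fin P1 \<Longrightarrow> (\<And>E. P1 E \<Longrightarrow> P2 E) \<Longrightarrow> eventually_fin P2"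
  unfolding eventually_fin_def by blast

lemma eventually_fin_exists: "eventually_fin Pr \<Longrightarrow> \<exists>E\<in>fin_approx. Pr E"
  unfolding eventually_fin_def by blast

lemma upset_val_valD: "upset_val Bs valD"
  unfolding upset_val_def valD_def using upset_embs by blast

lemma upset_val_valE: "upset_val Bs (valE E)"
  unfolding upset_val_def valE_def using upset_embs by blast

lemma fg_upset_valE: "E \<in> fin_approx \<Longrightarrow> fg_upset (valE E m)"
  unfolding fin_approx_def valE_def using fg_upset_embs D_subset by blast

lemma valD_le_valE: "E \<in> fin_approx \<Longrightarrow> valD m \<subseteq> valE E m"
  unfolding fin_approx_def valD_def valE_def embs_def by blast

lemma sem_valE_mono:
  assumes "E \<le> E'"
  shows "pos \<phi> \<Longrightarrow> sem (valE E') \<phi> \<subseteq> sem (valE E) \<phi>"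
    and "neg \<phi> \<Longrightarrow> sem (valE E) \<phi> \<subseteq> sem (valE E') \<phi>"
proof -
  have "valE E' m \<subseteq> valE E m" for m
    using assms unfolding le_fun_def valE_def embs_def by blast
  then show "pos \<phi> \<Longrightarrow> sem (valE E') \<phi> \<subseteq> sem (valE E) \<phi>"
    and "neg \<phi> \<Longrightarrow> sem (valE E) \<phi> \<subseteq> sem (valE E') \<phi>"
    using eval_Up_mono[OF upset_val_valE upset_val_valE, of E' E \<phi>] by blast+
qed

lemma eventually_compactness:
  assumes P: "P \<in> Bs" and "pos a" "neg b"
    and fg: "\<forall>E\<in>fin_approx. fg_upset (sem (valE E) a) \<and> fg_upset (sem (valE E) b)"
    and wit: "\<And>E. E \<in> fin_approx \<Longrightarrow> \<exists>R\<in>Bs. P \<subseteq> R \<and> R \<in> sem (valE E) a \<and> R \<notin> sem (valE E) b"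
  shows "\<exists>R\<in>Bs. P \<subseteq> R \<and> (\<forall>E\<in>fin_approx. R \<in> sem (valE E) a \<and> R \<notin> sem (valE E) b)"
proof (rule Bstar_directed_compactness[OF _ P fg _ wit])
  show "fin_approx \<noteq> {}" using fin_approx_bot by blast
next
  fix E1 E2 assume "E1 \<in> fin_approx" "E2 \<in> fin_approx"
  then show "\<exists>E\<in>fin_approx. sem (valE E) a \<subseteq> sem (valE E1) a \<inter> sem (valE E2) a \<and>
      sem (valE E1) b \<union> sem (valE E2) b \<subseteq> sem (valE E) b"
    using sem_valE_mono[of E1 "sup E1 E2"] sem_valE_mono[of E2 "sup E1 E2"] \<open>pos a\<close> \<open>neg b\<close>
    by (intro bexI[of _ "sup E1 E2"]) (auto intro: fin_approx_sup)
qed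

definition refuted_eventually :: "nat fm \<Rightarrow> bool" where
  "refuted_eventually \<phi> \<longleftrightarrow>
     (\<forall>P\<in>Bs. P \<notin> sem valD \<phi> \<longrightarrow> eventually_fin (\<lambda>E. P \<notin> sem (valE E) \<phi>))"

definition verified_eventually :: "nat fm \<Rightarrow> bool" where
  "verified_eventually \<phi> \<longleftrightarrow>
     (\<forall>P\<in>Bs. P \<in> sem valD \<phi> \<longrightarrow> eventually_fin (\<lambda>E. P \<in> sem (valE E) \<phi>))"

lemma refuted_eventually_Var: "refuted_eventually (Var m)"
  unfolding refuted_eventually_def
proof (intro ballI impI)
  fix P assume "P \<in> Bs" "P \<notin> sem valD (Var m)"
  then obtain d where d: "d \<in> D m" "d \<notin> P" unfolding valD_def embs_def by auto
  define E where "E = bot(m := {d})"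
  have "{n. E n \<noteq> {}} = {m}" unfolding E_def by auto
  then have "E \<in> fin_approx" unfolding fin_approx_def E_def using d by auto
  moreover have "P \<notin> sem (valE E') (Var m)" if "E \<le> E'" for E'
  proof -
    have "d \<in> E' m" using le_funD[OF that, of m] unfolding E_def by simp
    then show ?thesis using d unfolding valE_def embs_def by auto
  qed
  ultimately show "eventually_fin (\<lambda>E. P \<notin> sem (valE E) (Var m))"
    unfolding eventually_fin_def by blast
qed

lemma verified_eventually_Var: "verified_eventually (Var m)"
  unfolding verified_eventually_def eventually_fin_def
  using fin_approx_bot valD_le_valE by fastforce

lemma refuted_eventually_Bot: "refuted_eventually Bot"
  unfolding refuted_eventually_def by (simp add: eventually_fin_True)

lemma refuted_eventually_And:
  "refuted_eventually a \<Longrightarrow> refuted_eventually b \<Longrightarrow> refuted_eventually (And a b)"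
  unfolding refuted_eventually_def by (auto elim: eventually_fin_mono)

lemma verified_eventually_And:
  "verified_eventually a \<Longrightarrow> verified_eventually b \<Longrightarrow> verified_eventually (And a b)"
  unfolding verified_eventually_def by (auto dest: eventually_fin_conj)

lemma refuted_eventually_Or:
  "refuted_eventually a \<Longrightarrow> refuted_eventually b \<Longrightarrow> refuted_eventually (Or a b)"
  unfolding refuted_eventually_def by (auto dest: eventually_fin_conj)

lemma verified_eventually_Or:
  "verified_eventually a \<Longrightarrow> verified_eventually b \<Longrightarrow> verified_eventually (Or a b)"
  unfolding verified_eventually_def by (auto elim: eventually_fin_mono)

lemma refuted_eventually_Impl:
  assumes a: "verified_eventually a" and b: "refuted_eventually b"
  shows "refuted_eventually (Impl a b)"
  unfolding refuted_eventually_def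
proof (intro ballI impI)
  fix P assume P: "P \<in> Bs" "P \<notin> sem valD (Impl a b)"
  then obtain Q where Q: "Q \<in> Bs" "P \<subseteq> Q" "Q \<in> sem valD a" "Q \<notin> sem valD b"
    using mem_eval_Impl[OF upset_val_valD] by blast
  have "eventually_fin (\<lambda>E. Q \<in> sem (valE E) a)"
    using a Q(1,3) unfolding verified_eventually_def by blast
  moreover have "eventually_fin (\<lambda>E. Q \<notin> sem (valE E) b)"
    using b Q(1,4) unfolding refuted_eventually_def by blast
  ultimately have "eventually_fin (\<lambda>E. Q \<in> sem (valE E) a \<and> Q \<notin> sem (valE E) b)"
    by (rule eventually_fin_conj)
  then show "eventually_fin (\<lambda>E. P \<notin> sem (valE E) (Impl a b))"
    by (rule eventually_fin_mono) (use Q mem_eval_Impl[OF upset_val_valE] in blast)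
qed

lemma refuted_eventually_Not:
  assumes "verified_eventually a"
  shows "refuted_eventually (Not a)"
  using refuted_eventually_Impl[OF assms refuted_eventually_Bot]
  unfolding refuted_eventually_def by simp

text \<open>If \<open>P\<close> failed \<open>a \<rightarrow> b\<close> cofinally, every stage would have a successor of \<open>P\<close> in \<open>a\<close> but
  not in \<open>b\<close>; compactness yields a single such successor for all stages, and by the hypotheses
  on \<open>a\<close> and \<open>b\<close> it separates them under \<open>valD\<close> too.\<close>

lemma verified_eventually_Impl:
  assumes "pos a" "neg b" and a: "refuted_eventually a" and b: "verified_eventually b"
    and fg: "\<forall>E\<in>fin_approx. fg_upset (sem (valE E) a) \<and> fg_upset (sem (valE E) b)"
  shows "verified_eventually (Impl a b)"
  unfolding verified_eventually_def
proof (intro ballI impI)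
  fix P assume P: "P \<in> Bs" and PD: "P \<in> sem valD (Impl a b)"
  show "eventually_fin (\<lambda>E. P \<in> sem (valE E) (Impl a b))"
  proof (rule ccontr)
    assume not_ev: "\<not> eventually_fin (\<lambda>E. P \<in> sem (valE E) (Impl a b))"
    have "\<exists>R\<in>Bs. P \<subseteq> R \<and> R \<in> sem (valE E) a \<and> R \<notin> sem (valE E) b" if E: "E \<in> fin_approx" for E
    proof -
      obtain E' where E': "E' \<in> fin_approx" "E \<le> E'" "P \<notin> sem (valE E') (Impl a b)"
        using not_ev E unfolding eventually_fin_def by blast
      then obtain R where "R \<in> Bs" "P \<subseteq> R" "R \<in> sem (valE E') a" "R \<notin> sem (valE E') b"
        using mem_eval_Impl[OF upset_val_valE] P by blast
      then show ?thesis
        using sem_valE_mono[OF E'(2)] \<open>pos a\<close> \<open>neg b\<close> by blast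
    qed
    then obtain R where R: "R \<in> Bs" "P \<subseteq> R" "\<forall>E\<in>fin_approx. R \<in> sem (valE E) a \<and> R \<notin> sem (valE E) b"
      using eventually_compactness[OF P \<open>pos a\<close> \<open>neg b\<close> fg] by blast
    have "R \<in> sem valD a"
    proof (rule ccontr)
      assume "R \<notin> sem valD a"
      then have "eventually_fin (\<lambda>E. R \<notin> sem (valE E) a)"
        using a R(1) unfolding refuted_eventually_def by blast
      then show False using eventually_fin_exists R(3) by blast
    qed
    moreover have "R \<notin> sem valD b"
    proof
      assume "R \<in> sem valD b"
      then have "eventually_fin (\<lambda>E. R \<in> sem (valE E) b)"
        using b R(1) unfolding verified_eventually_def by blast
      then show False using eventually_fin_exists R(3) by blast
    qed
    ultimately show False using PD R(1,2) mem_eval_Impl[OF upset_val_valD] by blast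
  qed
qed

lemma verified_eventually_Not:
  assumes "Neg \<in> L" "pos a" "refuted_eventually a"
    and fg: "\<forall>E\<in>fin_approx. fg_upset (sem (valE E) a)"
  shows "verified_eventually (Not a)"
proof -
  have "verified_eventually (Impl a Bot)"
    using assms by (intro verified_eventually_Impl) (auto simp: verified_eventually_def
      fg_upset_empty)
  then show ?thesis unfolding verified_eventually_def by simp
qed

lemma esakia_lemma:
  assumes "syms \<phi> \<subseteq> L"
  shows "(pos \<phi> \<longrightarrow> refuted_eventually \<phi>) \<and> (neg \<phi> \<longrightarrow> verified_eventually \<phi>)"
  using assms
proof (induction \<phi>)
  case (Var m)
  then show ?case by (simp add: refuted_eventually_Var)
next
  case Top
  then show ?case by (simp add: refuted_eventually_def verified_eventually_def eventually_fin_True)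
next
  case Bot
  then show ?case by (simp add: refuted_eventually_Bot verified_eventually_def)
next
  case (And a b)
  then show ?case by (simp add: refuted_eventually_And verified_eventually_And)
next
  case (Or a b)
  then show ?case by (simp add: refuted_eventually_Or verified_eventually_Or)
next
  case (Impl a b)
  have "fg_upset (sem (valE E) a) \<and> fg_upset (sem (valE E) b)" if "E \<in> fin_approx" for E
    using Impl.prems fg_upset_eval[of _ "valE E"] fg_upset_valE[OF that] by simp
  then have "\<forall>E\<in>fin_approx. fg_upset (sem (valE E) a) \<and> fg_upset (sem (valE E) b)" by blast
  then show ?case
    using Impl refuted_eventually_Impl verified_eventually_Impl by simp
next
  case (Not a)
  have "fg_upset (sem (valE E) a)" if "E \<in> fin_approx" for E
    using Not.prems fg_upset_eval[of _ "valE E"] fg_upset_valE[OF that] by simp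
  then have "\<forall>E\<in>fin_approx. fg_upset (sem (valE E) a)" by blast
  then show ?case
    using Not refuted_eventually_Not verified_eventually_Not by simp
qed

lemma verified_eventually_sahl_ant: "sahl_ant \<alpha> \<Longrightarrow> syms \<alpha> \<subseteq> L \<Longrightarrow> verified_eventually \<alpha>"
proof (induction \<alpha> rule: sahl_ant.induct)
  case (1 x)
  then show ?case by (simp add: verified_eventually_Var)
next
  case (2 \<phi>)
  then show ?case using esakia_lemma by blast
next
  case 3
  then show ?case by (simp add: verified_eventually_def)
next
  case 4
  then show ?case by (simp add: verified_eventually_def eventually_fin_True)
next
  case (5 a b)
  then show ?case by (simp add: verified_eventually_And)
next
  case (6 a b)
  then show ?case by (simp add: verified_eventually_Or)
qed

lemma refuted_eventually_sahl_imp: "sahl_imp s \<Longrightarrow> syms s \<subseteq> L \<Longrightarrow> refuted_eventually s"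
  by (induction s rule: sahl_imp.induct)
    (auto simp: esakia_lemma refuted_eventually_Not refuted_eventually_Impl
        verified_eventually_sahl_ant)

lemma refuted_eventually_sahl_comb: "sahl_comb s \<Longrightarrow> syms s \<subseteq> L \<Longrightarrow> refuted_eventually s"
  by (induction s rule: sahl_comb.induct)
    (auto simp: refuted_eventually_sahl_imp refuted_eventually_And refuted_eventually_Or)

lemma eventually_refutes_all:
  assumes "\<forall>\<phi>\<in>set phis. sahl_comb \<phi> \<and> syms \<phi> \<subseteq> L" "P \<in> Bs" "\<forall>\<phi>\<in>set phis. P \<notin> sem valD \<phi>"
  shows "eventually_fin (\<lambda>E. \<forall>\<phi>\<in>set phis. P \<notin> sem (valE E) \<phi>)"
  using assms
proof (induction phis)
  case Nil
  then show ?case by (simp add: eventually_fin_True)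
next
  case (Cons \<phi> phis)
  then have "eventually_fin (\<lambda>E. P \<notin> sem (valE E) \<phi>)"
    using refuted_eventually_sahl_comb unfolding refuted_eventually_def by simp
  with Cons show ?case by (simp add: eventually_fin_conj)
qed

end

section \<open>Minimal valuations for Sahlqvist formulas\<close>

context variety_algebra
begin

definition below where
  "below W v u \<longleftrightarrow> upset_val Bs u \<and> (\<forall>n. u n \<subseteq> v n) \<and> (\<forall>p\<in>W. snd p \<in> u (fst p))"

definition witness_set where
  "witness_set v W \<longleftrightarrow> finite W \<and> (\<forall>p\<in>W. snd p \<in> v (fst p))"

lemma below_mono: "below W v u \<Longrightarrow> W' \<subseteq> W \<Longrightarrow> below W' v u"
  unfolding below_def by blast

lemma witness_set_Un: "witness_set v W1 \<Longrightarrow> witness_set v W2 \<Longrightarrow> witness_set v (W1 \<union> W2)"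
  unfolding witness_set_def by blast

lemma sahl_ant_witness:
  fixes \<alpha> :: "nat fm"
  assumes "sahl_ant \<alpha>" "upset_val Bs v" "P \<in> sem v \<alpha>"
  shows "\<exists>W. witness_set v W \<and> (\<forall>u. below W v u \<longrightarrow> P \<in> sem u \<alpha>)"
  using assms
proof (induction \<alpha> rule: sahl_ant.induct)
  case (1 x)
  have "witness_set v {(x, P)}" unfolding witness_set_def using 1 by simp
  moreover have "\<forall>u. below {(x, P)} v u \<longrightarrow> P \<in> sem u (Var x)"
    unfolding below_def by simp
  ultimately show ?case by blast
next
  case (2 \<phi>)
  have "witness_set v {}" unfolding witness_set_def by simp
  moreover have "\<forall>u. below {} v u \<longrightarrow> P \<in> sem u \<phi>"
  proof (intro allI impI)
    fix u assume "below {} v u"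
    then have u: "upset_val Bs u" "\<forall>n. u n \<subseteq> v n" unfolding below_def by auto
    show "P \<in> sem u \<phi>" using eval_Up_mono[OF u(1) 2(2) u(2), of \<phi>] 2(1,3) by blast
  qed
  ultimately show ?case by blast
next
  case 3
  then show ?case by simp
next
  case 4
  have "witness_set v {}" unfolding witness_set_def by simp
  moreover have "\<forall>u. below {} v u \<longrightarrow> P \<in> sem u Top" using 4 by simp
  ultimately show ?case by blast
next
  case (5 a b)
  obtain W1 where W1: "witness_set v W1" "\<forall>u. below W1 v u \<longrightarrow> P \<in> sem u a" using 5 by auto
  obtain W2 where W2: "witness_set v W2" "\<forall>u. below W2 v u \<longrightarrow> P \<in> sem u b" using 5 by auto
  have "\<forall>u. below (W1 \<union> W2) v u \<longrightarrow> P \<in> sem u (And a b)"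
    using W1(2) W2(2) below_mono by (metis Un_upper1 Un_upper2 eval_Up_simps(4) IntI)
  then show ?case using witness_set_Un[OF W1(1) W2(1)] by blast
next
  case (6 a b)
  show ?case
  proof (cases "P \<in> sem v a")
    case True
    then obtain W1 where W1: "witness_set v W1" "\<forall>u. below W1 v u \<longrightarrow> P \<in> sem u a" using 6 by auto
    then show ?thesis by auto
  next
    case False
    then have "P \<in> sem v b" using 6 by simp
    then obtain W1 where W1: "witness_set v W1" "\<forall>u. below W1 v u \<longrightarrow> P \<in> sem u b" using 6 by auto
    then show ?thesis by auto
  qed
qed

lemma sahl_imp_witness:
  fixes s :: "nat fm"
  assumes "sahl_imp s" "upset_val Bs v" "P \<in> Bs" "P \<notin> sem v s"
  shows "\<exists>W. witness_set v W \<and> (\<forall>u. below W v u \<longrightarrow> P \<notin> sem u s)"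
  using assms
proof (induction s rule: sahl_imp.induct)
  case (1 \<phi>)
  have "witness_set v {}" unfolding witness_set_def by simp
  moreover have "\<forall>u. below {} v u \<longrightarrow> P \<notin> sem u \<phi>"
  proof (intro allI impI)
    fix u assume "below {} v u"
    then have u: "upset_val Bs u" "\<forall>n. u n \<subseteq> v n" unfolding below_def by auto
    show "P \<notin> sem u \<phi>" using eval_Up_mono[OF u(1) 1(2) u(2), of \<phi>] 1(1,4) by blast
  qed
  ultimately show ?case by blast
next
  case (2 \<phi>)
  obtain Q where Q: "Q \<in> Bs" "P \<subseteq> Q" "Q \<in> sem v \<phi>"
    using 2(4) mem_eval_Not[OF 2(2), of P \<phi>] 2(3) by blast
  obtain W where W: "witness_set v W" "\<forall>u. below W v u \<longrightarrow> Q \<in> sem u \<phi>"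
    using sahl_ant_witness[OF 2(1) 2(2) Q(3)] by blast
  have "\<forall>u. below W v u \<longrightarrow> P \<notin> sem u (Not \<phi>)"
  proof (intro allI impI)
    fix u assume bu: "below W v u"
    then have u: "upset_val Bs u" unfolding below_def by auto
    show "P \<notin> sem u (Not \<phi>)" using mem_eval_Not[OF u, of P \<phi>] W(2) bu Q by blast
  qed
  then show ?case using W(1) by blast
next
  case (3 \<phi> \<psi>)
  obtain Q where Q: "Q \<in> Bs" "P \<subseteq> Q" "Q \<in> sem v \<phi>" "Q \<notin> sem v \<psi>"
    using 3(5) mem_eval_Impl[OF 3(3), of P \<phi> \<psi>] 3(4) by blast
  obtain W where W: "witness_set v W" "\<forall>u. below W v u \<longrightarrow> Q \<in> sem u \<phi>"
    using sahl_ant_witness[OF 3(1) 3(3) Q(3)] by blast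
  have "\<forall>u. below W v u \<longrightarrow> P \<notin> sem u (Impl \<phi> \<psi>)"
  proof (intro allI impI)
    fix u assume bu: "below W v u"
    then have u: "upset_val Bs u" "\<forall>n. u n \<subseteq> v n" unfolding below_def by auto
    have "Q \<notin> sem u \<psi>" using eval_Up_mono[OF u(1) 3(3) u(2), of \<psi>] 3(2) Q(4) by blast
    then show "P \<notin> sem u (Impl \<phi> \<psi>)" using mem_eval_Impl[OF u(1), of P \<phi> \<psi>] W(2) bu Q by blast
  qed
  then show ?case using W(1) by blast
qed

lemma sahl_comb_witness:
  fixes s :: "nat fm"
  assumes "sahl_comb s" "upset_val Bs v" "P \<in> Bs" "P \<notin> sem v s"
  shows "\<exists>W. witness_set v W \<and> (\<forall>u. below W v u \<longrightarrow> P \<notin> sem u s)"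
  using assms
proof (induction s rule: sahl_comb.induct)
  case (1 \<phi>)
  then show ?case using sahl_imp_witness by blast
next
  case (2 a b)
  show ?case
  proof (cases "P \<in> sem v a")
    case True
    then have "P \<notin> sem v b" using 2 by simp
    then obtain W where "witness_set v W" "\<forall>u. below W v u \<longrightarrow> P \<notin> sem u b" using 2 by auto
    then show ?thesis by auto
  next
    case False
    then obtain W where "witness_set v W" "\<forall>u. below W v u \<longrightarrow> P \<notin> sem u a" using 2 by auto
    then show ?thesis by auto
  qed
next
  case (3 a b)
  obtain W1 where W1: "witness_set v W1" "\<forall>u. below W1 v u \<longrightarrow> P \<notin> sem u a" using 3 by auto
  obtain W2 where W2: "witness_set v W2" "\<forall>u. below W2 v u \<longrightarrow> P \<notin> sem u b" using 3 by auto
  have "\<forall>u. below (W1 \<union> W2) v u \<longrightarrow> P \<notin> sem u (Or a b)"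
  proof (intro allI impI)
    fix u assume "below (W1 \<union> W2) v u"
    then have "below W1 v u" "below W2 v u" using below_mono by blast+
    then show "P \<notin> sem u (Or a b)" using W1(2) W2(2) by simp
  qed
  then show ?case using witness_set_Un[OF W1(1) W2(1)] by blast
qed

lemma sahlqvist_witness:
  fixes phis :: "nat fm list"
  assumes "\<forall>\<phi>\<in>set phis. sahl_comb \<phi>" "upset_val Bs v" "P \<in> Bs" "\<forall>\<phi>\<in>set phis. P \<notin> sem v \<phi>"
  shows "\<exists>W. witness_set v W \<and> (\<forall>u. below W v u \<longrightarrow> (\<forall>\<phi>\<in>set phis. P \<notin> sem u \<phi>))"
  using assms
proof (induction phis)
  case Nil
  have "witness_set v {}" unfolding witness_set_def by simp
  then show ?case by auto
next
  case (Cons a phis)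
  have ca: "sahl_comb a" "P \<notin> sem v a" using Cons.prems by auto
  obtain W1 where W1: "witness_set v W1" "\<forall>u. below W1 v u \<longrightarrow> P \<notin> sem u a"
    using sahl_comb_witness[OF ca(1) Cons.prems(2,3) ca(2)] by blast
  obtain W2 where W2: "witness_set v W2" "\<forall>u. below W2 v u \<longrightarrow> (\<forall>\<phi>\<in>set phis. P \<notin> sem u \<phi>)"
    using Cons by auto
  have "\<forall>u. below (W1 \<union> W2) v u \<longrightarrow> (\<forall>\<phi>\<in>set (a # phis). P \<notin> sem u \<phi>)"
  proof (intro allI impI)
    fix u assume "below (W1 \<union> W2) v u"
    then have "below W1 v u" "below W2 v u" using below_mono by blast+
    then show "\<forall>\<phi>\<in>set (a # phis). P \<notin> sem u \<phi>" using W1(2) W2(2) by simp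
  qed
  then show ?case using witness_set_Un[OF W1(1) W2(1)] by blast
qed

lemma refutation_by_elements:
  fixes phis :: "nat fm list"
  assumes "\<forall>\<phi>\<in>set phis. sahl_comb \<phi>" "upset_val Bs v" "F \<in> Bs" "\<forall>\<phi>\<in>set phis. F \<notin> sem v \<phi>"
  shows "\<exists>D. (\<forall>m. D m \<subseteq> car B) \<and> (\<forall>\<phi>\<in>set phis. F \<notin> sem (\<lambda>m. embs (D m)) \<phi>)"
proof -
  obtain W where W: "witness_set v W" "\<forall>u. below W v u \<longrightarrow> (\<forall>\<phi>\<in>set phis. F \<notin> sem u \<phi>)"
    using sahlqvist_witness[OF assms] by blast
  \<comment> \<open>\<open>embs (D m)\<close> is the upward closure of the witness points for \<open>m\<close>, by \<open>Bstar_Inter_le\<close>\<close>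
  define D where "D m = car B \<inter> \<Inter>{Q. (m, Q) \<in> W}" for m
  have Dc: "\<forall>m. D m \<subseteq> car B" unfolding D_def by blast
  have finW: "finite W" and Wv: "\<forall>p\<in>W. snd p \<in> v (fst p)" using W(1) unfolding witness_set_def by auto
  have vX: "v m \<subseteq> Bs" for m using assms(2) unfolding upset_val_def is_upset_def by blast
  have "below W v (\<lambda>m. embs (D m))"
    unfolding below_def
  proof (intro conjI allI ballI)
    show "upset_val Bs (\<lambda>m. embs (D m))" unfolding upset_val_def using upset_embs by blast
  next
    fix m
    show "embs (D m) \<subseteq> v m"
    proof
      fix R assume R: "R \<in> embs (D m)"
      then have RX: "R \<in> Bs" and DR: "D m \<subseteq> R" unfolding embs_def by auto
      define Wm where "Wm = {Q. (m, Q) \<in> W}"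
      have "Wm = snd ` (W \<inter> {p. fst p = m})" unfolding Wm_def by force
      then have finm: "finite Wm" using finW by simp
      have WmX: "Wm \<subseteq> Bs" unfolding Wm_def using Wv vX by fastforce
      have "car B \<inter> \<Inter>Wm \<subseteq> R" using DR unfolding D_def Wm_def by simp
      then obtain Q where Q: "Q \<in> Wm" "Q \<subseteq> R" using Bstar_Inter_le[OF finm WmX RX] by blast
      have "Q \<in> v m" using Q(1) Wv unfolding Wm_def by force
      then show "R \<in> v m" using assms(2) Q(2) RX unfolding upset_val_def is_upset_def by blast
    qed
  next
    fix p assume p: "p \<in> W"
    have "snd p \<in> Bs" using Wv p vX by blast
    moreover have "D (fst p) \<subseteq> snd p" unfolding D_def using p by (cases p) auto
    ultimately show "snd p \<in> embs (D (fst p))" unfolding embs_def by blast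
  qed
  then show ?thesis using W(2) Dc by blast
qed

lemma refutation_by_finite_elements:
  fixes phis :: "nat fm list"
  assumes "\<forall>\<phi>\<in>set phis. sahl_comb \<phi> \<and> syms \<phi> \<subseteq> L" "upset_val Bs v" "F \<in> Bs"
    "\<forall>\<phi>\<in>set phis. F \<notin> sem v \<phi>"
  shows "\<exists>E. (\<forall>m. finite (E m) \<and> E m \<subseteq> car B) \<and> finite {m. E m \<noteq> {}} \<and>
     (\<forall>\<phi>\<in>set phis. F \<notin> sem (\<lambda>m. embs (E m)) \<phi>)"
proof -
  obtain D where D: "\<forall>m. D m \<subseteq> car B" "\<forall>\<phi>\<in>set phis. F \<notin> sem (\<lambda>m. embs (D m)) \<phi>"
    using refutation_by_elements[of phis v F] assms by blast
  interpret es: approximation L H S B D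
    by unfold_locales (use D(1) in blast)
  have "es.eventually_fin (\<lambda>E. \<forall>\<phi>\<in>set phis. F \<notin> sem (es.valE E) \<phi>)"
    using es.eventually_refutes_all[OF assms(1) assms(3)] D(2) unfolding es.valD_def by simp
  then obtain E where E: "E \<in> es.fin_approx" "\<forall>\<phi>\<in>set phis. F \<notin> sem (es.valE E) \<phi>"
    using es.eventually_fin_exists by blast
  have "(\<forall>m. finite (E m) \<and> E m \<subseteq> car B) \<and> finite {m. E m \<noteq> {}}"
    using E(1) D(1) unfolding es.fin_approx_def by blast
  moreover have "es.valE E = (\<lambda>m. embs (E m))" unfolding es.valE_def by simp
  ultimately show ?thesis using E(2) by auto
qed

end

section \<open>The formulas of \<open>\<A>(\<Phi>)\<close>\<close>

fun trans_fm :: "bool \<Rightarrow> (nat \<times> nat) option fm \<Rightarrow> nat fm" where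
  "trans_fm z (Var x) = Var (to_nat x)"
| "trans_fm z Top = Top"
| "trans_fm z Bot = Bot"
| "trans_fm z (And a b) = And (trans_fm z a) (trans_fm z b)"
| "trans_fm z (Or a b) = Or (trans_fm z a) (trans_fm z b)"
| "trans_fm z (Impl a b) = (if b = Bot \<and> \<not> z then Not (trans_fm z a) else Impl (trans_fm z a)
    (trans_fm z b))"
| "trans_fm z (Not a) = Not (trans_fm z a)"

lemma eval_Up_trans_fm: "eval (Up X le) w (trans_fm z \<phi>) = eval (Up X le) (\<lambda>x. w (to_nat x)) \<phi>"
  by (induction \<phi>) auto

lemma heyting_eval_trans_fm: assumes heyting_H: "heyting H" and w: "\<forall>n. w n \<in> car H"
  shows "eval H w (trans_fm z \<phi>) = eval H (\<lambda>x. w (to_nat x)) \<phi>"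
proof (induction \<phi>)
  case (Impl a b)
  have wc: "\<forall>x. (\<lambda>x. w (to_nat x)) x \<in> car H" using w by simp
  show ?case
  proof (cases "b = Bot \<and> \<not> z")
    case True
    then show ?thesis using Impl heyting_neg[OF heyting_H heyting_eval_closed[OF heyting_H wc, of a]] by simp
  next
    case False
    then show ?thesis using Impl by auto
  qed
qed auto

fun expressible :: "opsym set \<Rightarrow> 'v fm \<Rightarrow> bool" where
  "expressible L (Var x) = True"
| "expressible L Top = (One \<in> L)"
| "expressible L Bot = (Zero \<in> L)"
| "expressible L (And a b) = (Meet \<in> L \<and> expressible L a \<and> expressible L b)"
| "expressible L (Or a b) = (Join \<in> L \<and> expressible L a \<and> expressible L b)"
| "expressible L (Impl a b) = (expressible L a \<and> (if b = Bot then (Zero \<in> L \<or> Neg \<in> L) else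
    expressible L b))"
| "expressible L (Not a) = (Neg \<in> L \<and> expressible L a)"

lemma syms_trans_fm: "Imp \<in> L \<Longrightarrow> expressible L \<phi> \<Longrightarrow> syms (trans_fm (Zero \<in> L) \<phi>) \<subseteq> L"
proof (induction \<phi>)
  case (Impl a b)
  show ?case
  proof (cases "b = Bot")
    case True
    then show ?thesis using Impl by (cases "Zero \<in> L") auto
  next
    case False
    then show ?thesis using Impl by auto
  qed
qed auto

lemma expressible_imps:
  "(\<forall>g\<in>set gs. expressible L g) \<Longrightarrow> (expressible L c \<or> (gs \<noteq> [] \<and> c = Bot \<and> (Zero \<in> L \<or> Neg \<in> L))) \<Longrightarrow>
      expressible L (imps gs c)"
proof (induction gs)
  case Nil
  then show ?case by simp
next
  case (Cons g gs)
  show ?case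
  proof (cases gs)
    case Nil
    then show ?thesis using Cons.prems by auto
  next
    case (Cons g' gs')
    then have "imps gs c \<noteq> Bot" by simp
    moreover have "expressible L (imps gs c)" using Cons.IH Cons.prems \<open>gs = g' # gs'\<close> by auto
    ultimately show ?thesis using Cons.prems by simp
  qed
qed

lemma bold_ne: "k \<ge> 1 \<Longrightarrow> bold k \<phi> \<noteq> []"
  by (induction \<phi>) (auto simp: concat_eq_Nil_conv)

lemma bold_expressible: "k \<ge> 1 \<Longrightarrow> syms \<phi> \<subseteq> L \<Longrightarrow> \<forall>\<psi>\<in>set (bold k \<phi>). expressible L \<psi>"
proof (induction \<phi>)
  case (Impl a b)
  have ga: "\<forall>g\<in>set (bold k a). expressible L g" and gb: "\<forall>g\<in>set (bold k b). expressible L g" using Impl by auto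
  show ?case
  proof
    fix \<psi> assume "\<psi> \<in> set (bold k (Impl a b))"
    then obtain c where c: "c \<in> set (bold k b)" "\<psi> = imps (bold k a) c" by auto
    show "expressible L \<psi>" unfolding c(2) using expressible_imps[OF ga] gb c(1) by blast
  qed
next
  case (Not a)
  have ga: "\<forall>g\<in>set (bold k a). expressible L g" using Not by auto
  have ne: "bold k a \<noteq> []" using bold_ne Not.prems(1) by blast
  have N: "Neg \<in> L" using Not.prems by auto
  show ?case using expressible_imps[OF ga] ne N by simp
qed auto

definition meets :: "'x set set \<Rightarrow> 'x set set list \<Rightarrow> 'x set set" where
  "meets X Vs = {x \<in> X. \<forall>V\<in>set Vs. x \<in> V}"

lemma eval_Up_imps: assumes u: "upset_val X u"
  shows "eval (Up X (\<subseteq>)) u (imps gs c) = {x \<in> X. \<forall>Q\<in>X. x \<subseteq> Q \<longrightarrow> Q \<in> meets X (map (eval (Up X (\<subseteq>)) u)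
      gs) \<longrightarrow> Q \<in> eval (Up X (\<subseteq>)) u c}"
proof (induction gs)
  case Nil
  have "is_upset X (\<subseteq>) (eval (Up X (\<subseteq>)) u c)" using upset_eval[OF u] .
  then show ?case unfolding meets_def is_upset_def by auto
next
  case (Cons g gs)
  show ?case
  proof (rule set_eqI)
    fix x
    have "x \<in> eval (Up X (\<subseteq>)) u (imps (g # gs) c) \<longleftrightarrow>
      x \<in> X \<and> (\<forall>Q\<in>X. x \<subseteq> Q \<longrightarrow> Q \<in> eval (Up X (\<subseteq>)) u g \<longrightarrow> Q \<in> eval (Up X (\<subseteq>)) u (imps gs c))"
      using mem_eval_Impl[OF u, of x g "imps gs c"] by simp
    also have "\<dots> \<longleftrightarrow> x \<in> X \<and> (\<forall>Q\<in>X. x \<subseteq> Q \<longrightarrow> Q \<in> meets X (map (eval (Up X (\<subseteq>)) u) (g # gs)) \<longrightarrow> Q \<in> eval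
        (Up X (\<subseteq>)) u c)"
      unfolding Cons.IH meets_def
      using upset_eval[OF u, of g] unfolding is_upset_def by (auto dest: subset_trans)
    finally show "x \<in> eval (Up X (\<subseteq>)) u (imps (g # gs) c) \<longleftrightarrow>
      x \<in> {x \<in> X. \<forall>Q\<in>X. x \<subseteq> Q \<longrightarrow> Q \<in> meets X (map (eval (Up X (\<subseteq>)) u) (g # gs)) \<longrightarrow> Q \<in> eval (Up X (\<subseteq>)) u c}"
      by simp
  qed
qed

definition merge_val :: "'x set set \<Rightarrow> nat \<Rightarrow> ((nat \<times> nat) option \<Rightarrow> 'x set set) \<Rightarrow> nat \<Rightarrow> 'x set set" where
  "merge_val X k u m = {x \<in> X. \<forall>j\<in>{1..k}. x \<in> u (Some (m, j))}"

lemma upset_val_merge_val: "upset_val X u \<Longrightarrow> upset_val X (merge_val X k u)"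
  unfolding upset_val_def merge_val_def is_upset_def by blast

lemma eval_Up_bold: assumes k: "k \<ge> 1" and u: "upset_val X u"
  shows "meets X (map (eval (Up X (\<subseteq>)) u) (bold k \<phi>)) = eval (Up X (\<subseteq>)) (merge_val X k u) \<phi>"
proof (induction \<phi>)
  case (Var m)
  have "set [1..<Suc k] = {1..k}" by auto
  then show ?case unfolding meets_def merge_val_def by auto
next
  case Top
  show ?case unfolding meets_def by (auto simp: downset_def)
next
  case Bot
  have "eval (Up X (\<subseteq>)) u (Var (Some (1,1))) \<subseteq> X" using eval_Up_subset[OF u] .
  then show ?case unfolding meets_def by (auto simp: downset_def)
next
  case (And a b)
  then show ?case unfolding meets_def by auto
next
  case (Or a b)
  have sa: "meets X (map (eval (Up X (\<subseteq>)) u) (bold k a)) \<subseteq> X" and sb: "meets X (map (eval (Up X (\<subseteq>))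
      u) (bold k b)) \<subseteq> X"
    unfolding meets_def by auto
  have "meets X (map (eval (Up X (\<subseteq>)) u) (bold k (Or a b))) =
      meets X (map (eval (Up X (\<subseteq>)) u) (bold k a)) \<union> meets X (map (eval (Up X (\<subseteq>)) u) (bold k b))"
    unfolding meets_def by auto
  then show ?case using Or by simp
next
  case (Impl a b)
  have wu: "upset_val X (merge_val X k u)" using upset_val_merge_val[OF u] .
  show ?case
  proof (rule set_eqI)
    fix x
    have "x \<in> meets X (map (eval (Up X (\<subseteq>)) u) (bold k (Impl a b))) \<longleftrightarrow>
       x \<in> X \<and> (\<forall>c\<in>set (bold k b). \<forall>Q\<in>X. x \<subseteq> Q \<longrightarrow> Q \<in> meets X (map (eval (Up X (\<subseteq>)) u) (bold k a)) \<longrightarrow>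
           Q \<in> eval (Up X (\<subseteq>)) u c)"
      unfolding meets_def by (auto simp: eval_Up_imps[OF u] meets_def)
    also have "\<dots> \<longleftrightarrow> x \<in> X \<and> (\<forall>Q\<in>X. x \<subseteq> Q \<longrightarrow> Q \<in> eval (Up X (\<subseteq>)) (merge_val X k u) a \<longrightarrow> Q \<in> meets X (map
        (eval (Up X (\<subseteq>)) u) (bold k b)))"
      unfolding Impl.IH(1)[symmetric] unfolding meets_def by auto
    also have "\<dots> \<longleftrightarrow> x \<in> eval (Up X (\<subseteq>)) (merge_val X k u) (Impl a b)"
      unfolding Impl.IH(2) using mem_eval_Impl[OF wu, of x a b] by simp
    finally show "x \<in> meets X (map (eval (Up X (\<subseteq>)) u) (bold k (Impl a b))) \<longleftrightarrow> x \<in> eval (Up X (\<subseteq>))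
        (merge_val X k u) (Impl a b)" .
  qed
next
  case (Not a)
  have wu: "upset_val X (merge_val X k u)" using upset_val_merge_val[OF u] .
  show ?case
  proof (rule set_eqI)
    fix x
    have "x \<in> meets X (map (eval (Up X (\<subseteq>)) u) (bold k (Not a))) \<longleftrightarrow>
       x \<in> X \<and> (\<forall>Q\<in>X. x \<subseteq> Q \<longrightarrow> Q \<in> meets X (map (eval (Up X (\<subseteq>)) u) (bold k a)) \<longrightarrow> Q \<in> {})"
      unfolding meets_def by (auto simp: eval_Up_imps[OF u] meets_def)
    also have "\<dots> \<longleftrightarrow> x \<in> eval (Up X (\<subseteq>)) (merge_val X k u) (Not a)"
      unfolding Not.IH using mem_eval_Not[OF wu, of x a] by simp
    finally show "x \<in> meets X (map (eval (Up X (\<subseteq>)) u) (bold k (Not a))) \<longleftrightarrow> x \<in> eval (Up X (\<subseteq>))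
        (merge_val X k u) (Not a)" .
  qed
qed

lemma Up_sat_iff_points:
  fixes phis :: "nat fm list" and X :: "'x set set"
  shows "Up_sat X (\<subseteq>) phis \<longleftrightarrow> (\<forall>v :: nat \<Rightarrow> 'x set set. upset_val X v \<longrightarrow> (\<forall>F\<in>X. \<exists>\<phi>\<in>set phis. F \<in> eval
      (Up X (\<subseteq>)) v \<phi>))"
proof
  assume A: "Up_sat X (\<subseteq>) phis"
  show "\<forall>v :: nat \<Rightarrow> 'x set set. upset_val X v \<longrightarrow> (\<forall>F\<in>X. \<exists>\<phi>\<in>set phis. F \<in> eval (Up X (\<subseteq>)) v \<phi>)"
  proof (intro allI impI ballI)
    fix v :: "nat \<Rightarrow> 'x set set" and F assume v: "upset_val X v" and F: "F \<in> X"
    show "\<exists>\<phi>\<in>set phis. F \<in> eval (Up X (\<subseteq>)) v \<phi>"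
    proof (rule ccontr)
      assume nF: "\<not> (\<exists>\<phi>\<in>set phis. F \<in> eval (Up X (\<subseteq>)) v \<phi>)"
      define Y where "Y = {x \<in> X. F \<subseteq> x}"
      define Z where "Z = Y - {F}"
      have uY: "is_upset X (\<subseteq>) Y" unfolding Y_def is_upset_def by auto
      have uZ: "is_upset X (\<subseteq>) Z" unfolding Z_def Y_def is_upset_def by auto
      have "\<forall>\<phi>\<in>set phis. eval (Up X (\<subseteq>)) v \<phi> \<inter> Y \<subseteq> Z" using nF unfolding Z_def by blast
      then have "Y \<subseteq> Z" using A v uY uZ unfolding Up_sat_def upset_val_def by blast
      moreover have "F \<in> Y" unfolding Y_def using F by blast
      ultimately show False unfolding Z_def by blast
    qed
  qed
next
  assume A: "\<forall>v :: nat \<Rightarrow> 'x set set. upset_val X v \<longrightarrow> (\<forall>F\<in>X. \<exists>\<phi>\<in>set phis. F \<in> eval (Up X (\<subseteq>)) v \<phi>)"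
  show "Up_sat X (\<subseteq>) phis" unfolding Up_sat_def
  proof (intro allI impI subsetI)
    fix v :: "nat \<Rightarrow> 'x set set" and Y Z y
    assume v: "\<forall>n. is_upset X (\<subseteq>) (v n)" and uY: "is_upset X (\<subseteq>) Y" and uZ: "is_upset X (\<subseteq>) Z"
      and sub: "\<forall>\<phi>\<in>set phis. eval (Up X (\<subseteq>)) v \<phi> \<inter> Y \<subseteq> Z" and y: "y \<in> Y"
    have "y \<in> X" using uY y unfolding is_upset_def by blast
    then obtain \<phi> where "\<phi> \<in> set phis" "y \<in> eval (Up X (\<subseteq>)) v \<phi>" using A v unfolding upset_val_def
        by blast
    then show "y \<in> Z" using sub y by blast
  qed
qed

definition A_fm :: "nat \<Rightarrow> nat fm list \<Rightarrow> (nat \<times> nat) option fm" where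
  "A_fm k phis = imps (map (\<lambda>\<phi>. imps (bold k \<phi>) (Var None)) phis) (Var None)"

lemma A_Phi_eq: "A_Phi phis = {A_fm k phis | k. k \<ge> 1}"
  unfolding A_Phi_def A_fm_def by simp

lemma A_fm_expressible: "k \<ge> 1 \<Longrightarrow> \<forall>\<phi>\<in>set phis. syms \<phi> \<subseteq> L \<Longrightarrow> expressible L (A_fm k phis)"
  unfolding A_fm_def
  by (rule expressible_imps) (auto intro!: expressible_imps simp: bold_expressible)

lemma eval_Up_A_fm:
  assumes k: "k \<ge> 1" and u: "upset_val X u"
  shows "eval (Up X (\<subseteq>)) u (A_fm k phis) = {x \<in> X. \<forall>Q\<in>X. x \<subseteq> Q \<longrightarrow>
    (\<forall>\<phi>\<in>set phis. \<forall>R\<in>X. Q \<subseteq> R \<longrightarrow> R \<in> eval (Up X (\<subseteq>)) (merge_val X k u) \<phi> \<longrightarrow> R \<in> u None) \<longrightarrow> Q \<in> u None}"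
proof -
  have premise: "eval (Up X (\<subseteq>)) u (imps (bold k \<phi>) (Var None)) =
      {x \<in> X. \<forall>R\<in>X. x \<subseteq> R \<longrightarrow> R \<in> eval (Up X (\<subseteq>)) (merge_val X k u) \<phi> \<longrightarrow> R \<in> u None}" for \<phi>
    by (simp add: eval_Up_imps[OF u] eval_Up_bold[OF k u])
  have "Q \<in> meets X (map (eval (Up X (\<subseteq>)) u) (map (\<lambda>\<phi>. imps (bold k \<phi>) (Var None)) phis)) \<longleftrightarrow>
      Q \<in> X \<and> (\<forall>\<phi>\<in>set phis. \<forall>R\<in>X. Q \<subseteq> R \<longrightarrow> R \<in> eval (Up X (\<subseteq>)) (merge_val X k u) \<phi> \<longrightarrow> R \<in> u None)"
    for Q
    by (auto simp: meets_def premise)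
  then show ?thesis
    unfolding A_fm_def eval_Up_imps[OF u] by auto
qed

lemma A_fm_valid_Up:
  assumes k: "k \<ge> 1" and sat: "Up_sat X (\<subseteq>) phis" and u: "upset_val X u"
  shows "eval (Up X (\<subseteq>)) u (A_fm k phis) = X"
proof -
  have "\<forall>Q\<in>X. \<exists>\<phi>\<in>set phis. Q \<in> eval (Up X (\<subseteq>)) (merge_val X k u) \<phi>"
    using sat upset_val_merge_val[OF u] unfolding Up_sat_iff_points by blast
  then show ?thesis unfolding eval_Up_A_fm[OF k u] by blast
qed

section \<open>The two directions\<close>

lemma finite_family_lists:
  assumes "\<forall>m. finite (E m)" "finite {m. E m \<noteq> {}}"
  obtains lst :: "nat \<Rightarrow> 'a list" and k where "\<And>m. set (lst m) = E m" "\<And>m. length (lst m) < k"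
proof -
  have "\<forall>m. \<exists>xs. set xs = E m" using finite_list assms(1) by blast
  then obtain lst where lst: "\<And>m. set (lst m) = E m" by (metis choice)
  define k where "k = Suc (\<Sum>m\<in>{m. E m \<noteq> {}}. length (lst m))"
  have "length (lst m) < k" for m
  proof (cases "E m = {}")
    case False
    then show ?thesis
      unfolding k_def using member_le_sum[of m "{m. E m \<noteq> {}}" "\<lambda>m. length (lst m)"] assms(2)
      by simp
  next
    case True
    then have "lst m = []" using lst[of m] by simp
    then show ?thesis unfolding k_def by simp
  qed
  then show ?thesis using that lst by blast
qed

context variety_algebra
begin

text \<open>Evaluation of an \<open>\<A>(\<Phi>)\<close>-style formula in the \<open>L\<close>-algebra \<open>B\<close>: its variables are
  coded as natural numbers, and \<open>\<psi> \<rightarrow> 0\<close> is read as \<open>\<not>\<psi>\<close> when \<open>0 \<notin> L\<close>.\<close>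

definition evalL :: "((nat \<times> nat) option \<Rightarrow> 'b) \<Rightarrow> (nat \<times> nat) option fm \<Rightarrow> 'b" where
  "evalL a \<psi> = eval B (\<lambda>n. a (from_nat n)) (trans_fm (Zero \<in> L) \<psi>)"

lemma emb_evalL:
  assumes "expressible L \<psi>" and a: "\<forall>x. a x \<in> car B"
  shows "evalL a \<psi> \<in> car B" "emb (evalL a \<psi>) = sem (\<lambda>x. emb (a x)) \<psi>"
proof -
  have syms: "syms (trans_fm (Zero \<in> L) \<psi>) \<subseteq> L" using syms_trans_fm[OF imp assms(1)] .
  show "evalL a \<psi> \<in> car B"
    unfolding evalL_def using eval_closed[OF B_closed syms] a by simp
  show "emb (evalL a \<psi>) = sem (\<lambda>x. emb (a x)) \<psi>"
    unfolding evalL_def using emb_eval[OF syms, of "\<lambda>n. a (from_nat n)"] a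
    by (simp add: eval_Up_trans_fm)
qed

definition top_fm :: "nat fm" where
  "top_fm = (if One \<in> L then Top else Impl (Var 0) (Var 0))"

lemma top_fm_syms: "syms top_fm \<subseteq> L"
  unfolding top_fm_def using imp by auto

lemma top_fm_heyting: "\<forall>x. v x \<in> car H \<Longrightarrow> eval H v top_fm = tp H"
  unfolding top_fm_def using heyting_imp_refl[OF heyting_H] by simp

lemma top_fm_B: assumes w: "\<forall>x. w x \<in> car B" shows "eval B w top_fm = one"
proof -
  have w0: "w 0 \<in> car B" using w by blast
  show ?thesis
    unfolding top_fm_def using B_top_eq[OF _ w0] one_eq[OF w0] by simp
qed

lemma evalL_A_fm:
  assumes k: "k \<ge> 1" and sq: "\<forall>\<phi>\<in>set phis. syms \<phi> \<subseteq> L" and val: "valid_in H S (A_fm k phis)"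
    and a: "\<forall>x. a x \<in> car B"
  shows "evalL a (A_fm k phis) = one"
proof -
  have syms: "syms (trans_fm (Zero \<in> L) (A_fm k phis)) \<subseteq> L"
    using syms_trans_fm[OF imp A_fm_expressible[OF k sq]] .
  have "evalL a (A_fm k phis) = eval B (\<lambda>n. a (from_nat n)) top_fm"
    unfolding evalL_def
  proof (rule variety_eq[OF syms top_fm_syms])
    fix v :: "nat \<Rightarrow> 'a" assume v: "\<forall>x. v x \<in> S"
    then have vH: "\<forall>x. v x \<in> car H" using S_subset by blast
    have "eval H v (trans_fm (Zero \<in> L) (A_fm k phis)) = eval H (\<lambda>x. v (to_nat x)) (A_fm k phis)"
      using heyting_eval_trans_fm[OF heyting_H vH] .
    also have "\<dots> = tp H"
      using val v unfolding valid_in_def by simp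
    finally show "eval H v (trans_fm (Zero \<in> L) (A_fm k phis)) = eval H v top_fm"
      using top_fm_heyting[OF vH] by simp
  qed (use a in simp)
  then show ?thesis using top_fm_B a by simp
qed

lemma emb_one: "a \<in> car B \<Longrightarrow> emb one = Bs"
  unfolding emb_def using filter_one Bstar_filter by blast

lemma filter_singleton_one:
  assumes b: "b \<in> car B"
  shows "is_filter {one}"
  unfolding impl_filter_def
proof (intro conjI allI impI ballI)
  show "{one} \<subseteq> car B" using one_in[OF b] by blast
  show "im B a a \<in> {one}" if "a \<in> car B" for a using one_eq[OF that] by simp
  fix a c assume "a \<in> {one}" "im B a c \<in> {one}" "c \<in> car B"
  then show "c \<in> {one}" using B_imp_refl_imp[OF b] one_eq[OF b] by simp
qed

lemma eq_one_if_emb_eq_Bs: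
  assumes c: "c \<in> car B" and "emb c = Bs"
  shows "c = one"
proof (rule ccontr)
  assume "c \<noteq> one"
  then obtain P where "P \<in> Bs" "c \<notin> P"
    using Bstar_separation[OF filter_singleton_one[OF c] c] \<open>c \<noteq> one\<close> by blast
  then show False using assms(2) unfolding emb_def by blast
qed

lemma sem_emb_A_fm:
  assumes "k \<ge> 1" "\<forall>\<phi>\<in>set phis. syms \<phi> \<subseteq> L" "valid_in H S (A_fm k phis)"
    and a: "\<forall>x. a x \<in> car B"
  shows "sem (\<lambda>x. emb (a x)) (A_fm k phis) = Bs"
  using emb_evalL(2)[OF A_fm_expressible a] evalL_A_fm[OF assms] emb_one a assms(1,2) by metis

lemma finite_assignment_encoding:
  assumes E: "\<forall>m. finite (E m) \<and> E m \<subseteq> car B" "finite {m. E m \<noteq> {}}" and b: "b \<in> car B"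
  obtains k a where "k \<ge> 1" "\<forall>x. a x \<in> car B" "merge_val Bs k (\<lambda>x. emb (a x)) = (\<lambda>m. embs (E m))"
proof -
  obtain lst k where lst: "\<And>m. set (lst m) = E m" and len: "\<And>m. length (lst m) < k"
    using finite_family_lists[of E] E(1,2) by blast
  \<comment> \<open>unused indices go to \<open>one\<close>, which lies in every point\<close>
  define a where "a x = (case x of Some (m, j) \<Rightarrow>
      if 1 \<le> j \<and> j \<le> length (lst m) then lst m ! (j - 1) else one | None \<Rightarrow> one)" for x
  have one: "one \<in> car B" using one_in[OF b] .
  have a_val: "a (Some (m, j)) \<in> E m \<or> a (Some (m, j)) = one" for m j
  proof (cases "1 \<le> j \<and> j \<le> length (lst m)")
    case True
    then have "lst m ! (j - 1) \<in> set (lst m)" by (intro nth_mem) linarith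
    then show ?thesis using True lst[of m] unfolding a_def by simp
  qed (auto simp: a_def)
  have "a x \<in> car B" for x
  proof (cases x)
    case None
    then show ?thesis using one unfolding a_def by simp
  next
    case (Some p)
    then obtain m j where "x = Some (m, j)" by (cases p) auto
    then show ?thesis using a_val[of m j] E(1) one by auto
  qed
  then have "\<forall>x. a x \<in> car B" by blast
  moreover have "merge_val Bs k (\<lambda>x. emb (a x)) m = embs (E m)" for m
  proof -
    have "(\<forall>j\<in>{1..k}. a (Some (m, j)) \<in> P) \<longleftrightarrow> E m \<subseteq> P" if P: "P \<in> Bs" for P
    proof
      assume all: "\<forall>j\<in>{1..k}. a (Some (m, j)) \<in> P"
      show "E m \<subseteq> P"
      proof
        fix c assume "c \<in> E m"
        then obtain i where i: "i < length (lst m)" "lst m ! i = c"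
          using lst by (metis in_set_conv_nth)
        then have "a (Some (m, Suc i)) = c" unfolding a_def by simp
        then show "c \<in> P" using all i(1) len[of m] by force
      qed
    next
      assume "E m \<subseteq> P"
      then have "a (Some (m, j)) \<in> P" for j
        using a_val[of m j] filter_one[OF Bstar_filter[OF P] b] by auto
      then show "\<forall>j\<in>{1..k}. a (Some (m, j)) \<in> P" by blast
    qed
    then show ?thesis unfolding merge_val_def emb_def embs_def by auto
  qed
  ultimately show ?thesis using that[of k a] len[of 0] by auto
qed

lemma Up_sat_of_valid:
  assumes sq: "\<forall>\<phi>\<in>set phis. sahl_comb \<phi> \<and> syms \<phi> \<subseteq> L"
    and valid: "\<forall>k\<ge>1. valid_in H S (A_fm k phis)"
  shows "Up_sat Bs (\<subseteq>) phis"
  unfolding Up_sat_iff_points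
proof (intro allI impI ballI)
  fix v :: "nat \<Rightarrow> 'b set set" and F assume v: "upset_val Bs v" and F: "F \<in> Bs"
  show "\<exists>\<phi>\<in>set phis. F \<in> sem v \<phi>"
  proof (rule ccontr)
    assume "\<not> (\<exists>\<phi>\<in>set phis. F \<in> sem v \<phi>)"
    then obtain E where E: "\<forall>m. finite (E m) \<and> E m \<subseteq> car B" "finite {m. E m \<noteq> {}}"
      "\<forall>\<phi>\<in>set phis. F \<notin> sem (\<lambda>m. embs (E m)) \<phi>"
      using refutation_by_finite_elements[OF sq v F] by blast
    obtain b where b: "b \<in> car B" using Bstar_proper[OF F] by blast
    obtain k a where k: "k \<ge> 1" and a: "\<forall>x. a x \<in> car B"
      and enc: "merge_val Bs k (\<lambda>x. emb (a x)) = (\<lambda>m. embs (E m))"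
      using finite_assignment_encoding[OF E(1,2) b] by blast
    let ?u = "\<lambda>x. emb (a x)"
    have bold_sem: "sem (\<lambda>m. embs (E m)) \<phi> = meets Bs (map (sem ?u) (bold k \<phi>))" for \<phi>
      using eval_Up_bold[OF k upset_val_emb] enc by simp
    have "\<forall>\<phi>\<in>set phis. \<exists>\<psi>\<in>set (bold k \<phi>). F \<notin> sem ?u \<psi>"
      using E(3) F unfolding bold_sem meets_def by auto
    then obtain \<psi> where \<psi>: "\<forall>\<phi>\<in>set phis. \<psi> \<phi> \<in> set (bold k \<phi>) \<and> F \<notin> sem ?u (\<psi> \<phi>)"
      by metis
    define c where "c \<phi> = evalL a (\<psi> \<phi>)" for \<phi>
    have c: "c \<phi> \<in> car B" "emb (c \<phi>) = sem ?u (\<psi> \<phi>)" if "\<phi> \<in> set phis" for \<phi>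
      using emb_evalL[OF _ a] bold_expressible[OF k] sq \<psi> that unfolding c_def by blast+
    have "c \<phi> \<notin> F" if "\<phi> \<in> set phis" for \<phi>
      using c(2)[OF that] \<psi> that F unfolding emb_def by blast
    then have C: "finite (c ` set phis)" "c ` set phis \<subseteq> car B" "c ` set phis \<inter> F = {}"
      using c(1) by auto
    obtain y where y: "y \<in> car B" "y \<notin> F" "\<forall>d\<in>c ` set phis. im B d y \<in> F"
      using Bstar_finite_refuter[OF F C] by blast
    let ?u' = "\<lambda>x. emb ((a(None := y)) x)"
    have "F \<in> sem ?u' (A_fm k phis)"
      using sem_emb_A_fm[OF k _ valid[rule_format, OF k]] sq a y(1) F by simp
    moreover have "merge_val Bs k ?u' = (\<lambda>m. embs (E m))"
      using enc unfolding merge_val_def by simp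
    moreover have "R \<in> emb y" if R: "R \<in> Bs" "F \<subseteq> R" and "\<phi> \<in> set phis"
      and "R \<in> sem (\<lambda>m. embs (E m)) \<phi>" for R \<phi>
    proof -
      have "R \<in> sem ?u (\<psi> \<phi>)" using that(3,4) \<psi> unfolding bold_sem meets_def by auto
      then have "c \<phi> \<in> R" using c(2)[OF that(3)] unfolding emb_def by auto
      moreover have "im B (c \<phi>) y \<in> R" using y(3) that by blast
      ultimately show ?thesis using filter_mp[OF Bstar_filter[OF R(1)] _ _ y(1)] R(1) unfolding
          emb_def by blast
    qed
    ultimately have "F \<in> emb y" unfolding eval_Up_A_fm[OF k upset_val_emb] by auto
    then show False using y(2) unfolding emb_def by blast
  qed
qed

end

lemma eval_car_update: "eval (H\<lparr>car := S\<rparr>) v \<phi> = eval H v \<phi>"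
  by (induction \<phi>) auto

lemma subreduct_in_variety: assumes "subreduct L H S" shows "H\<lparr>car := S\<rparr> \<in> variety L H S"
proof -
  have "closed_under L H S" using assms unfolding subreduct_def by blast
  then have "closed_under L (H\<lparr>car := S\<rparr>) (car (H\<lparr>car := S\<rparr>))" unfolding closed_under_def by simp
  then show ?thesis unfolding variety_def by (simp add: eval_car_update)
qed

lemma valid_of_Up_sat:
  assumes imp: "Imp \<in> L" and sub: "subreduct L H S" and sq: "\<forall>\<phi>\<in>set phis. syms \<phi> \<subseteq> L"
    and sat: "Up_sat (Bstar (H\<lparr>car := S\<rparr>)) (\<subseteq>) phis" and k: "k \<ge> 1"
  shows "valid_in H S (A_fm k phis)"
  unfolding valid_in_def
proof (intro allI impI)
  fix v :: "(nat \<times> nat) option \<Rightarrow> 'a" assume v: "\<forall>x. v x \<in> S"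
  interpret A: variety_algebra L H S "H\<lparr>car := S\<rparr>"
    using imp sub subreduct_in_variety[OF sub] by unfold_locales
  have vA: "\<forall>x. v x \<in> car (H\<lparr>car := S\<rparr>)" using v by simp
  have "A.emb (A.evalL v (A_fm k phis)) = A.sem (\<lambda>x. A.emb (v x)) (A_fm k phis)"
    using A.emb_evalL(2)[OF A_fm_expressible[OF k sq] vA] .
  also have "\<dots> = A.Bs"
    using A_fm_valid_Up[OF k sat A.upset_val_emb] .
  finally have "A.evalL v (A_fm k phis) = A.one"
    using A.eq_one_if_emb_eq_Bs A.emb_evalL(1)[OF A_fm_expressible[OF k sq] vA] by blast
  moreover have "A.evalL v (A_fm k phis) = eval H v (A_fm k phis)"
    using heyting_eval_trans_fm[OF A.heyting_H, of "\<lambda>n. v (from_nat n)"] v A.S_subset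
    unfolding A.evalL_def eval_car_update by auto
  moreover have "A.one = tp H"
  proof -
    have "v None \<in> car H" using v A.S_subset by blast
    then show ?thesis using A.one_eq[OF vA[rule_format, of None]] heyting_imp_refl[OF A.heyting_H]
        by simp
  qed
  ultimately show "eval H v (A_fm k phis) = tp H" by simp
qed

theorem lemma9p4:
  fixes L :: "opsym set" and phis :: "nat fm list" and H :: "'a alg" and S :: "'a set"
  assumes "Imp \<in> L"
    and "sahlqvist_quasi L phis"
    and "subreduct L H S"
  shows "((\<forall>\<phi>\<in>A_Phi phis. valid_in H S \<phi>) \<longrightarrow>
            (\<forall>B :: 'b alg. B \<in> variety L H S \<longrightarrow> Up_sat (Bstar B) (\<subseteq>) phis))
       \<and> ((\<forall>B :: 'a alg. B \<in> variety L H S \<longrightarrow> Up_sat (Bstar B) (\<subseteq>) phis) \<longrightarrow>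
            (\<forall>\<phi>\<in>A_Phi phis. valid_in H S \<phi>))"
proof (intro conjI impI allI ballI)
  have sq: "\<forall>\<phi>\<in>set phis. sahl_comb \<phi> \<and> syms \<phi> \<subseteq> L"
    using assms(2) unfolding sahlqvist_quasi_def by blast
  show "Up_sat (Bstar B) (\<subseteq>) phis"
    if "\<forall>\<phi>\<in>A_Phi phis. valid_in H S \<phi>" and B: "B \<in> variety L H S" for B :: "'b alg"
  proof -
    interpret variety_algebra L H S B using assms(1,3) B by unfold_locales
    show ?thesis using Up_sat_of_valid[OF sq] that(1) unfolding A_Phi_eq by blast
  qed
  show "valid_in H S \<phi>"
    if "\<forall>B :: 'a alg. B \<in> variety L H S \<longrightarrow> Up_sat (Bstar B) (\<subseteq>) phis" and "\<phi> \<in> A_Phi phis" for \<phi>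
    using that valid_of_Up_sat[OF assms(1,3)] sq subreduct_in_variety[OF assms(3)]
    unfolding A_Phi_eq by blast
qed

end
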